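(* Let $d,n\in\mathbb{N}$, $\tau\in(0,1)$, $\alpha\in(0,1)$. Let $\mu$ be a Borel probability distribution on $\mathbb{R}^d$ without atoms, and let $\mathcal{A}\subseteq\mathcal{B}(\mathbb{R}^d)$ with $\emptyset\in\mathcal{A}$ and $\dim_{\mathrm{VC}}(\mathcal{A})<\infty$. Let $\hat A\in\hat{\mathcal{A}}_n\bigl(\tau,\alpha,\mathcal{P}_{\mathrm{Lip}}(\mu)\bigr)$. Then for every $P\in\mathcal{P}_{\mathrm{Lip}}(\mu)$, with $\eta=\eta_P$, $$\mathbb{P}_P\bigl(\mu(\hat A)=0\mid \hat A\subseteq \mathcal{X}_\tau(\eta)\bigr)\ \ge\ \mathbb{P}_P\bigl(\{\mu(\hat A)=0\}\cap\{\hat A\subseteq\mathcal{X}_\tau(\eta)\}\bigr)\ \ge\ 1-\alpha,$$ and consequently $$R_\tau(\hat A,P,\mathcal{A})\ \ge\ (1-\alpha)\, M_\tau(P,\mathcal{A}) \;=\;\inf\Bigl\{R_\tau(\bar A,P,\mathcal{A}):\ \bar A\in\bar{\mathcal{A}}\cap\hat{\mathcal{A}}_n\bigl(\tau,\alpha,\mathcal{P}_{\mathrm{Lip}}(\mu)\bigr)\Bigr\}.$$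
   Context: For a distribution $P$ of a pair $(X,Y)$ on $\mathbb{R}^d\times[0,1]$, $\mu_P$ is the marginal law of $X$ and $\eta_P(x)=\mathbb{E}(Y\mid X=x)$ is the regression function (taken continuous). For $f:\mathbb{R}^d\to\mathbb{R}$ and $\xi\in\mathbb{R}$, $\mathcal{X}_\xi(f):=\{x:f(x)\ge\xi\}$. For $\mathcal{A}\subseteq\mathcal{B}(\mathbb{R}^d)$ with $\emptyset\in\mathcal A$, $M_\tau(P,\mathcal{A}):=\sup\{\mu_P(A):A\in\mathcal{A},\,A\subseteq\mathcal{X}_\tau(\eta_P)\}$. The sample is $\mathcal{D}=((X_1,Y_1),\dots,(X_n,Y_n))\sim P^{\otimes n}$. A data-dependent selection set is a map $\hat A:(\mathbb{R}^d\times[0,1])^n\to\mathcal{A}$ such that $(x,D)\mapsto \mathbb{1}\{x\in\hat A(D)\}$ is Borel measurable; $\hat{\mathcal{A}}_n$ denotes the set of these, and $\hat A$ abbreviates $\hat A(\mathcal D)$. For a family $\mathcal P$ of distributions, $\hat{\mathcal{A}}_n(\tau,\alpha,\mathcal{P})$ is the set of $\hat A\in\hat{\mathcal{A}}_n$ with $\inf_{P\in\mathcal{P}}\mathbb{P}_P(\hat A(\mathcal{D})\subseteq\mathcal{X}_\tau(\eta_P))\ge1-\alpha$. The regret is $R_\tau(\hat A,P,\mathcal A):=M_\tau(P,\mathcal A)-\mathbb{E}_P\{\mu_P(\hat A(\mathcal D))\mid \hat A(\mathcal D)\subseteq\mathcal X_\tau(\eta_P)\}$. $\mathcal{P}_{\mathrm{Lip}}(\mu)$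 is the set of Borel distributions on $\mathbb{R}^d\times[0,1]$ with marginal $\mu$ whose regression function is Lipschitz. $\hat A\in\hat{\mathcal A}_n$ is data independent if $\mathbb{1}\{\hat A(\mathcal D)=A\}$ is independent of $\mathcal D$ for every $A\in\mathcal A$; $\bar{\mathcal A}$ denotes the set of data-independent selection sets (which may use auxiliary randomisation). *)

theory Defs
  imports "HOL-Probability.Probability"
begin

text \<open>Outcomes: a sample of size n (as a function on indices {..<n}) together with an
  auxiliary uniform random variable U on [0,1] used for randomisation.\<close>

type_synonym 'a outcome = "(nat \<Rightarrow> 'a \<times> real) \<times> real"

definition is_distribution :: "('a::euclidean_space \<times> real) measure \<Rightarrow> bool" where
  "is_distribution P \<longleftrightarrow> prob_space P \<and> sets P = sets borel \<and> (AE z in P. snd z \<in> {0..1})"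

definition marginal :: "('a::euclidean_space \<times> real) measure \<Rightarrow> 'a measure" where
  "marginal P = distr P borel fst"

text \<open>eta is a version of E(Y | X = x).\<close>
definition is_regression :: "('a::euclidean_space \<times> real) measure \<Rightarrow> ('a \<Rightarrow> real) \<Rightarrow> bool" where
  "is_regression P eta \<longleftrightarrow> eta \<in> borel_measurable borel \<and> integrable (marginal P) eta \<and>
     (\<forall>B\<in>sets borel. (\<integral>z. indicator B (fst z) * snd z \<partial>P) = (\<integral>x. indicator B x * eta x \<partial>marginal P))"

definition P_Lip :: "'a::euclidean_space measure \<Rightarrow> (('a \<times> real) measure \<times> ('a \<Rightarrow> real)) set" where
  "P_Lip \<mu> = {(P, eta). is_distribution P \<and> marginal P = \<mu> \<and> is_regression P eta \<and>
      continuous_on UNIV eta \<and> (\<exists>L. L-lipschitz_on UNIV eta)}"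

definition superlevel :: "('a \<Rightarrow> real) \<Rightarrow> real \<Rightarrow> 'a set" where
  "superlevel f \<xi> = {x. f x \<ge> \<xi>}"

definition M_tau :: "real \<Rightarrow> ('a::euclidean_space \<times> real) measure \<Rightarrow> ('a \<Rightarrow> real) \<Rightarrow> 'a set set \<Rightarrow> real" where
  "M_tau \<tau> P eta \<A> = Sup {measure (marginal P) A | A. A \<in> \<A> \<and> A \<subseteq> superlevel eta \<tau>}"

definition shatters :: "'a set set \<Rightarrow> 'a set \<Rightarrow> bool" where
  "shatters \<A> F \<longleftrightarrow> {A \<inter> F | A. A \<in> \<A>} = Pow F"

definition finite_VC :: "'a set set \<Rightarrow> bool" where
  "finite_VC \<A> \<longleftrightarrow> (\<exists>k::nat. \<forall>F. finite F \<and> shatters \<A> F \<longrightarrow> card F \<le> k)"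

definition outcome_space :: "nat \<Rightarrow> ('a::euclidean_space) outcome measure" where
  "outcome_space n = (\<Pi>\<^sub>M i\<in>{..<n}. (borel :: ('a \<times> real) measure)) \<Otimes>\<^sub>M (borel :: real measure)"

definition sample_law :: "nat \<Rightarrow> ('a::euclidean_space \<times> real) measure \<Rightarrow> 'a outcome measure" where
  "sample_law n P = (\<Pi>\<^sub>M i\<in>{..<n}. P) \<Otimes>\<^sub>M uniform_measure lborel {0..1::real}"

definition selection_sets :: "nat \<Rightarrow> 'a::euclidean_space set set \<Rightarrow> ('a outcome \<Rightarrow> 'a set) set" where
  "selection_sets n \<A> = {Ah. (\<forall>\<omega>\<in>space (outcome_space n). Ah \<omega> \<in> \<A>) \<and>
      (\<lambda>(x, \<omega>). x \<in> Ah \<omega>) \<in> measurable ((borel :: 'a measure) \<Otimes>\<^sub>M outcome_space n) (count_space UNIV)}"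

definition cover_event :: "nat \<Rightarrow> ('a::euclidean_space outcome \<Rightarrow> 'a set) \<Rightarrow> ('a \<Rightarrow> real) \<Rightarrow> real \<Rightarrow> 'a outcome set" where
  "cover_event n Ah eta \<tau> = {\<omega> \<in> space (outcome_space n). Ah \<omega> \<subseteq> superlevel eta \<tau>}"

definition Ahat :: "nat \<Rightarrow> real \<Rightarrow> real \<Rightarrow> 'a::euclidean_space set set \<Rightarrow>
    (('a \<times> real) measure \<times> ('a \<Rightarrow> real)) set \<Rightarrow> ('a outcome \<Rightarrow> 'a set) set" where
  "Ahat n \<tau> \<alpha> \<A> PP = {Ah \<in> selection_sets n \<A>. \<forall>(P, eta)\<in>PP.
      cover_event n Ah eta \<tau> \<in> sets (sample_law n P) \<and>
      measure (sample_law n P) (cover_event n Ah eta \<tau>) \<ge> 1 - \<alpha>}"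

definition cond_prob :: "'b measure \<Rightarrow> 'b set \<Rightarrow> 'b set \<Rightarrow> real" where
  "cond_prob Q E C = measure Q (E \<inter> C) / measure Q C"

definition regret :: "nat \<Rightarrow> real \<Rightarrow> ('a::euclidean_space outcome \<Rightarrow> 'a set) \<Rightarrow>
    ('a \<times> real) measure \<Rightarrow> ('a \<Rightarrow> real) \<Rightarrow> 'a set set \<Rightarrow> real" where
  "regret n \<tau> Ah P eta \<A> = M_tau \<tau> P eta \<A> -
     (\<integral>\<omega>. indicator (cover_event n Ah eta \<tau>) \<omega> * measure (marginal P) (Ah \<omega>) \<partial>sample_law n P)
       / measure (sample_law n P) (cover_event n Ah eta \<tau>)"

definition data_indep :: "nat \<Rightarrow> 'a::euclidean_space set set \<Rightarrow>
    (('a \<times> real) measure \<times> ('a \<Rightarrow> real)) set \<Rightarrow> ('a outcome \<Rightarrow> 'a set) \<Rightarrow> bool" where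
  "data_indep n \<A> PP Ah \<longleftrightarrow> (\<forall>A\<in>\<A>. \<forall>(P, eta)\<in>PP.
     let Q = sample_law n P; E = {\<omega> \<in> space Q. Ah \<omega> = A} in
     E \<in> sets Q \<and>
     (\<forall>B\<in>sets (\<Pi>\<^sub>M i\<in>{..<n}. P).
        measure Q (E \<inter> (fst -` B \<inter> space Q)) = measure Q E * measure Q (fst -` B \<inter> space Q)))"

end

theory Submission
  imports Defs
begin

text \<open>
  Let \<open>S\<close> be finite. Multiplying the labels by a Lipschitz ramp that vanishes on \<open>S\<close> and equals \<open>1\<close>
  outside the \<open>r\<close>-neighbourhood of \<open>S\<close> keeps the law in \<open>P_Lip \<mu>\<close>, removes \<open>S\<close> from the
  \<open>\<tau>\<close>-superlevel set, and changes the sample only when a covariate falls into that neighbourhood,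
  which has vanishing \<open>\<mu>\<close>-mass as \<open>r \<rightarrow> 0\<close> because \<open>\<mu>\<close> has no atoms. So the coverage guarantee
  forces \<open>Ah\<close> to cover and to avoid \<open>S\<close> simultaneously with probability at least \<open>1 - \<alpha>\<close>.
  Taking for \<open>S\<close> an independent \<open>\<mu>\<close>-sample of size \<open>k\<close> and applying Fubini gives
  \<open>E[1\<^sub>C (1 - \<mu>(Ah))\<^sup>k] \<ge> 1 - \<alpha>\<close>, and \<open>k \<rightarrow> \<infinity>\<close> yields \<open>P(\<mu>(Ah) = 0, C) \<ge> 1 - \<alpha>\<close>; the regret
  bound follows. Selecting a near-optimal set with probability \<open>\<alpha>\<close> and \<open>{}\<close> otherwise, using only the
  auxiliary randomisation, shows that \<open>(1 - \<alpha>) M\<^sub>\<tau>\<close> is attained in the limit.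
\<close>

section \<open>Distributions and regression functions\<close>

lemma measurable_eq_borel_prod:
  assumes "sets P = sets (borel :: ('a::second_countable_topology \<times> 'b::second_countable_topology) measure)"
  shows "measurable P = measurable (borel \<Otimes>\<^sub>M borel)"
proof -
  have "sets P = sets (borel \<Otimes>\<^sub>M (borel :: 'b measure))"
    using assms by (simp only: borel_prod)
  then show ?thesis by (intro ext measurable_cong_sets[OF _ refl])
qed

lemma is_distributionD:
  assumes "is_distribution P"
  shows "prob_space P" "sets P = sets borel" "AE z in P. snd z \<in> {0..1}"
    and "measurable P = measurable borel"
    and "fst \<in> P \<rightarrow>\<^sub>M borel" "snd \<in> borel_measurable P"
proof -
  show "prob_space P" "sets P = sets borel" "AE z in P. snd z \<in> {0..1}"
    using assms by (auto simp: is_distribution_def)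
  then show "measurable P = measurable borel"
    by (intro ext measurable_cong_sets) auto
  show "fst \<in> P \<rightarrow>\<^sub>M borel" "snd \<in> borel_measurable P"
    unfolding measurable_eq_borel_prod[OF \<open>sets P = sets borel\<close>] by measurable
qed

lemma
  assumes "is_distribution P"
  shows prob_space_marginal: "prob_space (marginal P)"
    and sets_marginal: "sets (marginal P) = sets borel"
    and measurable_marginal: "measurable (marginal P) = measurable borel"
  using is_distributionD[OF assms]
  by (auto simp: marginal_def intro!: prob_space.prob_space_distr)

lemma integrable_indicator_fst_mult_snd:
  fixes P :: "('a::euclidean_space \<times> real) measure"
  assumes D: "is_distribution P" and [measurable]: "B \<in> sets borel"
  shows "integrable P (\<lambda>z. indicator B (fst z) * snd z)"
proof -
  interpret prob_space P using is_distributionD(1)[OF D] .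
  have [measurable]: "fst \<in> P \<rightarrow>\<^sub>M borel" "snd \<in> borel_measurable P"
    using is_distributionD(5,6)[OF D] .
  show ?thesis
  proof (rule integrable_const_bound[where B=1])
    show "AE z in P. norm (indicator B (fst z) * snd z) \<le> 1"
      using is_distributionD(3)[OF D] by eventually_elim (simp add: indicator_def)
  qed measurable
qed

text \<open>The integrals of \<open>eta\<close> and \<open>1 - eta\<close> over any \<open>B\<close> equal those of \<open>Y\<close> and \<open>1 - Y\<close> over
  \<open>{X \<in> B}\<close>, hence are nonnegative.\<close>

lemma regression_AE_unit:
  fixes P :: "('a::euclidean_space \<times> real) measure"
  assumes D: "is_distribution P" and R: "is_regression P eta"
  shows "AE x in marginal P. 0 \<le> eta x \<and> eta x \<le> 1"
proof -
  interpret P: prob_space P using is_distributionD(1)[OF D] .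
  interpret M: prob_space "marginal P" using prob_space_marginal[OF D] .
  have [measurable]: "fst \<in> P \<rightarrow>\<^sub>M borel" "snd \<in> borel_measurable P"
    and Y: "AE z in P. snd z \<in> {0..1}"
    using is_distributionD[OF D] by auto
  have sM: "sets (marginal P) = sets borel" using sets_marginal[OF D] .
  have [measurable]: "eta \<in> borel_measurable borel" and eta: "integrable (marginal P) eta"
    and reg: "\<And>B. B \<in> sets borel \<Longrightarrow>
      (\<integral>z. indicator B (fst z) * snd z \<partial>P) = (\<integral>x. indicator B x * eta x \<partial>marginal P)"
    using R by (auto simp: is_regression_def)
  have "AE x in marginal P. 0 \<le> eta x"
  proof (rule M.density_nonneg[OF eta])
    fix B assume "B \<in> sets (marginal P)"
    then have [measurable]: "B \<in> sets borel" using sM by simp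
    have "0 \<le> (\<integral>z. indicator B (fst z) * snd z \<partial>P)"
      by (rule integral_nonneg_AE) (use Y in eventually_elim, simp add: indicator_def)
    then show "0 \<le> set_lebesgue_integral (marginal P) B eta"
      using reg by (simp add: set_lebesgue_integral_def)
  qed
  moreover have "AE x in marginal P. 0 \<le> 1 - eta x"
  proof (rule M.density_nonneg)
    show "integrable (marginal P) (\<lambda>x. 1 - eta x)" using eta by simp
    fix B assume "B \<in> sets (marginal P)"
    then have [measurable]: "B \<in> sets borel" using sM by simp
    have "integrable P (\<lambda>z. indicator B (fst z) :: real)"
      by (intro P.integrable_const_bound[where B=1]) auto
    moreover have "integrable (marginal P) (\<lambda>x. indicator B x :: real)"
      using sM by (intro M.integrable_const_bound[where B=1]) auto
    moreover have "integrable (marginal P) (\<lambda>x. indicator B x * eta x)"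
      using integrable_mult_indicator[of B "marginal P" eta] sM eta by simp
    ultimately have "set_lebesgue_integral (marginal P) B (\<lambda>x. 1 - eta x)
        = (\<integral>x. indicator B x \<partial>marginal P) - (\<integral>x. indicator B x * eta x \<partial>marginal P)"
      unfolding set_lebesgue_integral_def
      by (simp add: right_diff_distrib Bochner_Integration.integral_diff)
    also have "(\<integral>x. (indicator B x :: real) \<partial>marginal P) = (\<integral>z. indicator B (fst z) \<partial>P)"
      unfolding marginal_def by (rule integral_distr) measurable
    also have "\<dots> - (\<integral>x. indicator B x * eta x \<partial>marginal P) = (\<integral>z. indicator B (fst z) * (1 - snd z) \<partial>P)"
      using integrable_indicator_fst_mult_snd[OF D] \<open>integrable P (\<lambda>z. indicator B (fst z) :: real)\<close> reg
      by (simp add: right_diff_distrib Bochner_Integration.integral_diff)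
    also have "\<dots> \<ge> 0"
      by (rule integral_nonneg_AE) (use Y in eventually_elim, simp add: indicator_def)
    finally show "0 \<le> set_lebesgue_integral (marginal P) B (\<lambda>x. 1 - eta x)" .
  qed
  ultimately show ?thesis by eventually_elim simp
qed

lemma regression_label_density:
  fixes P :: "('a::euclidean_space \<times> real) measure"
  assumes D: "is_distribution P" and R: "is_regression P eta"
  shows "distr (density P snd) borel fst = density (marginal P) eta"
proof (rule measure_eqI)
  interpret M: prob_space "marginal P" using prob_space_marginal[OF D] .
  have [measurable]: "fst \<in> P \<rightarrow>\<^sub>M borel" "snd \<in> borel_measurable P"
    and Y: "AE z in P. snd z \<in> {0..1}"
    using is_distributionD[OF D] by auto
  have eta01: "AE x in marginal P. 0 \<le> eta x \<and> eta x \<le> 1" using regression_AE_unit[OF D R] .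
  have sM: "sets (marginal P) = sets borel" using sets_marginal[OF D] .
  have [measurable]: "eta \<in> borel_measurable borel"
    and reg: "\<And>B. B \<in> sets borel \<Longrightarrow>
      (\<integral>z. indicator B (fst z) * snd z \<partial>P) = (\<integral>x. indicator B x * eta x \<partial>marginal P)"
    using R by (auto simp: is_regression_def)
  show "sets (distr (density P snd) borel fst) = sets (density (marginal P) eta)"
    using sM by simp
  fix B assume "B \<in> sets (distr (density P snd) borel fst)"
  then have [measurable]: "B \<in> sets borel" by simp
  have "emeasure (distr (density P snd) borel fst) B = (\<integral>\<^sup>+z. ennreal (indicator B (fst z) * snd z) \<partial>P)"
    by (subst emeasure_distr) (auto simp: emeasure_density indicator_def mult.commute
        intro!: nn_integral_cong)
  also have "\<dots> = ennreal (\<integral>z. indicator B (fst z) * snd z \<partial>P)"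
    using integrable_indicator_fst_mult_snd[OF D] Y
    by (intro nn_integral_eq_integral) (auto elim!: eventually_mono)
  also have "\<dots> = ennreal (\<integral>x. indicator B x * eta x \<partial>marginal P)"
    using reg by simp
  also have "\<dots> = (\<integral>\<^sup>+x. ennreal (indicator B x * eta x) \<partial>marginal P)"
  proof (rule nn_integral_eq_integral[symmetric])
    show "integrable (marginal P) (\<lambda>x. indicator B x * eta x)"
    proof (rule M.integrable_const_bound[where B=1])
      show "AE x in marginal P. norm (indicator B x * eta x) \<le> 1"
        using eta01 by eventually_elim (simp add: indicator_def)
    qed (simp add: measurable_marginal[OF D])
    show "AE x in marginal P. 0 \<le> indicator B x * eta x"
      using eta01 by eventually_elim simp
  qed
  also have "\<dots> = emeasure (density (marginal P) eta) B"
    by (subst emeasure_density)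
      (auto simp: sM measurable_marginal[OF D] indicator_def mult.commute intro!: nn_integral_cong)
  finally show "emeasure (distr (density P snd) borel fst) B = emeasure (density (marginal P) eta) B" .
qed

lemma regression_integral_mult:
  fixes P :: "('a::euclidean_space \<times> real) measure"
  assumes D: "is_distribution P" and R: "is_regression P eta"
    and [measurable]: "f \<in> borel_measurable borel"
  shows "(\<integral>z. f (fst z) * snd z \<partial>P) = (\<integral>x. f x * eta x \<partial>marginal P)"
proof -
  have [measurable]: "fst \<in> P \<rightarrow>\<^sub>M borel" "snd \<in> borel_measurable P"
    using is_distributionD[OF D] by auto
  have Y: "AE z in P. 0 \<le> snd z" using is_distributionD(3)[OF D] by (auto elim!: eventually_mono)
  have [measurable]: "eta \<in> borel_measurable borel" using R by (simp add: is_regression_def)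
  have eta: "AE x in marginal P. 0 \<le> eta x"
    using regression_AE_unit[OF D R] by (auto elim!: eventually_mono)
  have "(\<integral>z. f (fst z) * snd z \<partial>P) = integral\<^sup>L (density P snd) (\<lambda>z. f (fst z))"
    using Y by (simp add: integral_density mult.commute)
  also have "\<dots> = integral\<^sup>L (distr (density P snd) borel fst) f"
    by (rule integral_distr[symmetric]) auto
  also have "\<dots> = integral\<^sup>L (density (marginal P) eta) f"
    by (simp add: regression_label_density[OF D R])
  also have "\<dots> = (\<integral>x. f x * eta x \<partial>marginal P)"
    using eta sets_marginal[OF D] by (simp add: integral_density mult.commute)
  finally show ?thesis .
qed

section \<open>Damping the labels\<close>

lemma lipschitz_on_mult_bounded:
  fixes f g :: "'a::metric_space \<Rightarrow> real"
  assumes f: "A-lipschitz_on X f" and g: "B-lipschitz_on X g"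
    and f1: "\<And>x. x \<in> X \<Longrightarrow> \<bar>f x\<bar> \<le> 1" and g1: "\<And>x. x \<in> X \<Longrightarrow> \<bar>g x\<bar> \<le> 1"
  shows "(A + B)-lipschitz_on X (\<lambda>x. f x * g x)"
proof (rule lipschitz_onI)
  show "0 \<le> A + B" using lipschitz_on_nonneg[OF f] lipschitz_on_nonneg[OF g] by simp
  fix x y assume xy: "x \<in> X" "y \<in> X"
  have "\<bar>f x * g x - f y * g y\<bar> = \<bar>(f x - f y) * g x + f y * (g x - g y)\<bar>"
    by (simp add: algebra_simps)
  also have "\<dots> \<le> \<bar>f x - f y\<bar> * \<bar>g x\<bar> + \<bar>f y\<bar> * \<bar>g x - g y\<bar>"
    by (metis abs_mult abs_triangle_ineq)
  also have "\<dots> \<le> \<bar>f x - f y\<bar> + \<bar>g x - g y\<bar>"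
    using f1 g1 xy by (intro add_mono) (auto intro: mult_left_le mult_left_le_one_le)
  also have "\<dots> \<le> A * dist x y + B * dist x y"
    using lipschitz_onD[OF f xy] lipschitz_onD[OF g xy] by (simp add: dist_real_def)
  finally show "dist (f x * g x) (f y * g y) \<le> (A + B) * dist x y"
    by (simp add: dist_real_def algebra_simps)
qed

definition clip01 :: "real \<Rightarrow> real" where
  "clip01 y = max 0 (min 1 y)"

lemma clip01_bounds: "0 \<le> clip01 y" "clip01 y \<le> 1"
  by (auto simp: clip01_def)

lemma lipschitz_on_clip01: "1-lipschitz_on X clip01"
  by (rule lipschitz_onI) (auto simp: clip01_def dist_real_def)

lemma clip01_eq: "0 \<le> y \<Longrightarrow> y \<le> 1 \<Longrightarrow> clip01 y = y"
  by (simp add: clip01_def)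

definition label_scaling :: "('a \<Rightarrow> real) \<Rightarrow> 'a \<times> real \<Rightarrow> 'a \<times> real" where
  "label_scaling h z = (fst z, h (fst z) * snd z)"

lemma borel_measurable_label_scaling:
  fixes h :: "'a::euclidean_space \<Rightarrow> real"
  assumes "continuous_on UNIV h"
  shows "label_scaling h \<in> borel \<rightarrow>\<^sub>M borel"
  unfolding label_scaling_def
  by (intro borel_measurable_continuous_onI continuous_intros continuous_on_compose2[OF assms]) auto

lemma
  fixes P :: "('a::euclidean_space \<times> real) measure"
  assumes D: "is_distribution P" and h: "continuous_on UNIV h" "\<And>x. 0 \<le> h x \<and> h x \<le> 1"
  shows is_distribution_label_scaling: "is_distribution (distr P borel (label_scaling h))"
    and marginal_label_scaling: "marginal (distr P borel (label_scaling h)) = marginal P"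
proof -
  have T: "label_scaling h \<in> borel \<rightarrow>\<^sub>M borel" by (rule borel_measurable_label_scaling[OF h(1)])
  then have TP [measurable]: "label_scaling h \<in> P \<rightarrow>\<^sub>M borel" by (simp add: is_distributionD(4)[OF D])
  have "AE z in P. snd (label_scaling h z) \<in> {0..1}"
    using is_distributionD(3)[OF D]
    by eventually_elim (use h(2) in \<open>auto simp: label_scaling_def intro: mult_le_one\<close>)
  then have "AE z in distr P borel (label_scaling h). snd z \<in> {0..1}"
    by (subst AE_distr_iff) (auto simp: is_distributionD(4)[OF D] T
        intro!: borel_closed closed_Collect_conj closed_Collect_le continuous_intros)
  then show "is_distribution (distr P borel (label_scaling h))"
    using prob_space.prob_space_distr[OF is_distributionD(1)[OF D] TP] by (simp add: is_distribution_def)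
  have "fst \<in> borel_measurable (borel :: ('a \<times> real) measure)"
    by (intro borel_measurable_continuous_onI continuous_intros)
  then have "marginal (distr P borel (label_scaling h)) = distr P borel (fst \<circ> label_scaling h)"
    unfolding marginal_def by (intro distr_distr) simp_all
  also have "fst \<circ> label_scaling h = fst" by (auto simp: label_scaling_def)
  finally show "marginal (distr P borel (label_scaling h)) = marginal P" by (simp add: marginal_def)
qed

text \<open>Clipping \<open>eta\<close> to \<open>[0, 1]\<close> changes it only on a null set but makes the product with \<open>h\<close>
  Lipschitz.\<close>

lemma is_regression_label_scaling:
  fixes P :: "('a::euclidean_space \<times> real) measure"
  assumes D: "is_distribution P" and R: "is_regression P eta"
    and h: "continuous_on UNIV h" "\<And>x. 0 \<le> h x \<and> h x \<le> 1"
  shows "is_regression (distr P borel (label_scaling h)) (\<lambda>x. h x * clip01 (eta x))"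
proof -
  interpret M: prob_space "marginal P" using prob_space_marginal[OF D] .
  have T: "label_scaling h \<in> borel \<rightarrow>\<^sub>M borel" by (rule borel_measurable_label_scaling[OF h(1)])
  have [measurable]: "h \<in> borel_measurable borel" "eta \<in> borel_measurable borel"
    using borel_measurable_continuous_onI[OF h(1)] R by (auto simp: is_regression_def)
  have [measurable]: "fst \<in> borel_measurable (borel :: ('a \<times> real) measure)"
    "snd \<in> borel_measurable (borel :: ('a \<times> real) measure)"
    by (intro borel_measurable_continuous_onI continuous_intros)+
  have "0 \<le> h x * clip01 (eta x) \<and> h x * clip01 (eta x) \<le> 1" for x
    using h(2)[of x] clip01_bounds[of "eta x"] by (auto intro: mult_le_one)
  then have "integrable (marginal P) (\<lambda>x. h x * clip01 (eta x))"
    by (intro M.integrable_const_bound[where B=1]) (auto simp: measurable_marginal[OF D] clip01_def)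
  moreover have "(\<integral>z. indicator B (fst z) * snd z \<partial>distr P borel (label_scaling h)) =
      (\<integral>x. indicator B x * (h x * clip01 (eta x)) \<partial>marginal P)"
    if [measurable]: "B \<in> sets borel" for B
  proof -
    have "(\<integral>z. indicator B (fst z) * snd z \<partial>distr P borel (label_scaling h)) =
        (\<integral>z. (indicator B (fst z) * h (fst z)) * snd z \<partial>P)"
      using T by (subst integral_distr) (auto simp: is_distributionD(4)[OF D] label_scaling_def mult.assoc)
    also have "\<dots> = (\<integral>x. (indicator B x * h x) * eta x \<partial>marginal P)"
      by (rule regression_integral_mult[OF D R]) simp
    also have "\<dots> = (\<integral>x. indicator B x * (h x * clip01 (eta x)) \<partial>marginal P)"
    proof (rule integral_cong_AE)
      show "AE x in marginal P. indicator B x * h x * eta x = indicator B x * (h x * clip01 (eta x))"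
        using regression_AE_unit[OF D R] by eventually_elim (simp add: clip01_eq)
    qed (simp_all add: measurable_marginal[OF D] clip01_def)
    finally show ?thesis .
  qed
  ultimately show ?thesis
    by (simp add: is_regression_def marginal_label_scaling[OF D h] clip01_def)
qed

lemma label_scaling_in_P_Lip:
  fixes P :: "('a::euclidean_space \<times> real) measure" and h :: "'a \<Rightarrow> real"
  assumes PL: "(P, eta) \<in> P_Lip \<mu>"
    and hL: "K-lipschitz_on UNIV h" and h01: "\<And>x. 0 \<le> h x \<and> h x \<le> 1"
  shows "(distr P borel (label_scaling h), \<lambda>x. h x * clip01 (eta x)) \<in> P_Lip \<mu>"
proof -
  have D: "is_distribution P" and R: "is_regression P eta" and mP: "marginal P = \<mu>"
    using PL by (auto simp: P_Lip_def)
  obtain L where L: "L-lipschitz_on UNIV eta" using PL by (auto simp: P_Lip_def)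
  have hc: "continuous_on UNIV h" by (rule lipschitz_on_continuous_on[OF hL])
  have "(K + L)-lipschitz_on UNIV (\<lambda>x. h x * clip01 (eta x))"
    using lipschitz_on_compose2[OF L lipschitz_on_clip01] h01 clip01_bounds
    by (intro lipschitz_on_mult_bounded[OF hL]) auto
  then show ?thesis
    using is_distribution_label_scaling[OF D hc h01] marginal_label_scaling[OF D hc h01] mP
      is_regression_label_scaling[OF D R hc h01] lipschitz_on_continuous_on
    unfolding P_Lip_def by blast
qed

section \<open>Sample laws\<close>

lemma prob_space_uniform_unit: "prob_space (uniform_measure lborel {0..1::real})"
  by (rule prob_space_uniform_measure) auto

lemma prob_space_sample_law:
  assumes "prob_space P"
  shows "prob_space (sample_law n P)"
proof -
  interpret PP: prob_space "\<Pi>\<^sub>M i\<in>{..<n}. P" by (rule prob_space_PiM) (use assms in auto)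
  interpret U: prob_space "uniform_measure lborel {0..1::real}" by (rule prob_space_uniform_unit)
  interpret pair_prob_space "\<Pi>\<^sub>M i\<in>{..<n}. P" "uniform_measure lborel {0..1::real}" ..
  show ?thesis unfolding sample_law_def by unfold_locales
qed

lemma sets_sample_law:
  assumes "sets P = sets borel"
  shows "sets (sample_law n P) = sets (outcome_space n)"
  unfolding sample_law_def outcome_space_def
  by (intro sets_pair_measure_cong sets_PiM_cong refl) (simp_all add: assms)

lemma space_sample_law:
  assumes "sets P = sets borel"
  shows "space (sample_law n P) = space (outcome_space n)"
  using sets_eq_imp_space_eq[OF sets_sample_law[OF assms]] .

lemma space_sample_law_eq_Times:
  "space (sample_law n P) = space (\<Pi>\<^sub>M i\<in>{..<n}. P) \<times> UNIV"
  unfolding sample_law_def by (simp add: space_pair_measure)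

lemma measure_sample_law_Times:
  assumes "prob_space P" and A: "A \<in> sets (\<Pi>\<^sub>M i\<in>{..<n}. P)" and B: "B \<in> sets borel"
  shows "measure (sample_law n P) (A \<times> B) =
    measure (\<Pi>\<^sub>M i\<in>{..<n}. P) A * measure (uniform_measure lborel {0..1::real}) B"
proof -
  interpret PP: prob_space "\<Pi>\<^sub>M i\<in>{..<n}. P" by (rule prob_space_PiM) (use assms in auto)
  interpret U: prob_space "uniform_measure lborel {0..1::real}" by (rule prob_space_uniform_unit)
  have "emeasure (sample_law n P) (A \<times> B) =
      emeasure (\<Pi>\<^sub>M i\<in>{..<n}. P) A * emeasure (uniform_measure lborel {0..1::real}) B"
    unfolding sample_law_def by (rule U.emeasure_pair_measure_Times[OF A]) (use B in simp)
  also have "\<dots> = ennreal (measure (\<Pi>\<^sub>M i\<in>{..<n}. P) A * measure (uniform_measure lborel {0..1::real}) B)"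
    by (simp add: PP.emeasure_eq_measure U.emeasure_eq_measure ennreal_mult)
  finally show ?thesis by (simp add: measure_def)
qed

lemma measure_sample_law_randomisation_le:
  assumes "prob_space P" and a: "0 \<le> a" "a \<le> 1"
  shows "{\<omega> \<in> space (sample_law n P). snd \<omega> \<le> a} \<in> sets (sample_law n P)"
    and "measure (sample_law n P) {\<omega> \<in> space (sample_law n P). snd \<omega> \<le> a} = a"
proof -
  interpret PP: prob_space "\<Pi>\<^sub>M i\<in>{..<n}. P" by (rule prob_space_PiM) (use assms in auto)
  have eq: "{\<omega> \<in> space (sample_law n P). snd \<omega> \<le> a} = space (\<Pi>\<^sub>M i\<in>{..<n}. P) \<times> {..a}"
    by (auto simp: space_sample_law_eq_Times)
  show "{\<omega> \<in> space (sample_law n P). snd \<omega> \<le> a} \<in> sets (sample_law n P)"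
    by (subst eq, unfold sample_law_def, rule pair_measureI) auto
  have "measure (uniform_measure lborel {0..1::real}) {..a} =
      measure lborel ({0..1} \<inter> {..a}) / measure lborel {0..1::real}"
    by (rule measure_uniform_measure) auto
  also have "{0..1} \<inter> {..a} = {0..a::real}" using a by auto
  finally have "measure (uniform_measure lborel {0..1::real}) {..a} = a" using a by simp
  then show "measure (sample_law n P) {\<omega> \<in> space (sample_law n P). snd \<omega> \<le> a} = a"
    unfolding eq using a by (subst measure_sample_law_Times[OF assms(1)]) (auto simp: PP.prob_space)
qed

lemma measurable_sample_covariate:
  assumes "sets P = sets (borel :: ('a::euclidean_space \<times> real) measure)" and "i < n"
  shows "(\<lambda>\<omega>. fst (fst \<omega> i)) \<in> sample_law n P \<rightarrow>\<^sub>M borel"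
proof -
  have "fst \<in> P \<rightarrow>\<^sub>M borel"
    unfolding measurable_eq_borel_prod[OF assms(1)] by measurable
  moreover have "(\<lambda>f. f i) \<in> (\<Pi>\<^sub>M i\<in>{..<n}. P) \<rightarrow>\<^sub>M P"
    using assms(2) by (intro measurable_component_singleton) simp
  moreover have "fst \<in> sample_law n P \<rightarrow>\<^sub>M (\<Pi>\<^sub>M i\<in>{..<n}. P)"
    unfolding sample_law_def by (rule measurable_fst)
  ultimately show ?thesis
    using measurable_compose[OF _ measurable_compose[OF _ \<open>fst \<in> P \<rightarrow>\<^sub>M borel\<close>]] by blast
qed

lemma distr_sample_covariate:
  assumes P: "prob_space P" and sP: "sets P = sets (borel :: ('a::euclidean_space \<times> real) measure)"
    and i: "i < n"
  shows "distr (sample_law n P) borel (\<lambda>\<omega>. fst (fst \<omega> i)) = marginal P"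
proof -
  interpret U: prob_space "uniform_measure lborel {0..1::real}" by (rule prob_space_uniform_unit)
  have fst_P: "fst \<in> P \<rightarrow>\<^sub>M borel"
    unfolding measurable_eq_borel_prod[OF sP] by measurable
  have coord: "(\<lambda>f. f i) \<in> (\<Pi>\<^sub>M i\<in>{..<n}. P) \<rightarrow>\<^sub>M P"
    using i by (intro measurable_component_singleton) simp
  have data: "fst \<in> sample_law n P \<rightarrow>\<^sub>M (\<Pi>\<^sub>M i\<in>{..<n}. P)"
    unfolding sample_law_def by (rule measurable_fst)
  have "distr (sample_law n P) borel (\<lambda>\<omega>. fst (fst \<omega> i)) =
      distr (distr (sample_law n P) (\<Pi>\<^sub>M i\<in>{..<n}. P) fst) borel (\<lambda>f. fst (f i))"
    using distr_distr[OF measurable_compose[OF coord fst_P] data] by (simp add: comp_def)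
  also have "distr (sample_law n P) (\<Pi>\<^sub>M i\<in>{..<n}. P) fst = (\<Pi>\<^sub>M i\<in>{..<n}. P)"
    unfolding sample_law_def by (rule U.distr_pair_fst)
  also have "distr (\<Pi>\<^sub>M i\<in>{..<n}. P) borel (\<lambda>f. fst (f i)) =
      distr (distr (\<Pi>\<^sub>M i\<in>{..<n}. P) P (\<lambda>f. f i)) borel fst"
    using distr_distr[OF fst_P coord] by (simp add: comp_def)
  also have "distr (\<Pi>\<^sub>M i\<in>{..<n}. P) P (\<lambda>f. f i) = P"
    by (rule distr_PiM_component) (use P i in auto)
  finally show ?thesis by (simp add: marginal_def)
qed

lemma measurable_compose_PiM:
  assumes "T \<in> M \<rightarrow>\<^sub>M N"
  shows "compose I T \<in> (\<Pi>\<^sub>M i\<in>I. M) \<rightarrow>\<^sub>M (\<Pi>\<^sub>M i\<in>I. N)"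
  unfolding compose_def
proof (rule measurable_restrict)
  fix i assume "i \<in> I"
  then show "(\<lambda>x. T (x i)) \<in> (\<Pi>\<^sub>M i\<in>I. M) \<rightarrow>\<^sub>M N"
    using measurable_compose[OF measurable_component_singleton[of i I "\<lambda>_. M"] assms] by simp
qed

lemma sample_law_distr:
  fixes P :: "('a::euclidean_space \<times> real) measure"
  assumes P: "prob_space P" and sP: "sets P = sets borel" and T: "T \<in> borel \<rightarrow>\<^sub>M borel"
  shows "sample_law n (distr P borel T) =
    distr (sample_law n P) (outcome_space n) (\<lambda>\<omega>. (compose {..<n} T (fst \<omega>), snd \<omega>))"
proof -
  interpret P: prob_space P by (rule P)
  interpret U: prob_space "uniform_measure lborel {0..1::real}" by (rule prob_space_uniform_unit)
  define P' where "P' = distr P borel T"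
  have TP: "T \<in> P \<rightarrow>\<^sub>M P'"
    using T unfolding P'_def measurable_cong_sets[OF sP sets_distr] .
  have "prob_space P'" unfolding P'_def using T sP by (intro P.prob_space_distr) simp
  then have "distr (\<Pi>\<^sub>M i\<in>{..<n}. P) (\<Pi>\<^sub>M i\<in>{..<n}. P') (compose {..<n} T) =
      (\<Pi>\<^sub>M i\<in>{..<n}. distr P P' T)"
    by (intro distr_PiM_finite_prob_space') (use P TP in auto)
  also have "distr P P' T = P'"
    unfolding P'_def by (rule distr_cong) auto
  finally have data: "distr (\<Pi>\<^sub>M i\<in>{..<n}. P) (\<Pi>\<^sub>M i\<in>{..<n}. P') (compose {..<n} T) =
      (\<Pi>\<^sub>M i\<in>{..<n}. P')" .
  have U_id: "distr (uniform_measure lborel {0..1::real}) (uniform_measure lborel {0..1::real}) (\<lambda>x. x) =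
      uniform_measure lborel {0..1::real}"
    by (rule distr_id2) simp
  have T_PiM: "compose {..<n} T \<in> (\<Pi>\<^sub>M i\<in>{..<n}. P) \<rightarrow>\<^sub>M (\<Pi>\<^sub>M i\<in>{..<n}. P')"
    by (rule measurable_compose_PiM[OF TP])
  have "sample_law n P' = distr (\<Pi>\<^sub>M i\<in>{..<n}. P) (\<Pi>\<^sub>M i\<in>{..<n}. P') (compose {..<n} T)
      \<Otimes>\<^sub>M distr (uniform_measure lborel {0..1::real}) (uniform_measure lborel {0..1::real}) (\<lambda>x. x)"
    unfolding sample_law_def data U_id ..
  also have "\<dots> = distr (sample_law n P) ((\<Pi>\<^sub>M i\<in>{..<n}. P') \<Otimes>\<^sub>M uniform_measure lborel {0..1::real})
      (\<lambda>(x, y). (compose {..<n} T x, y))"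
    unfolding sample_law_def
    by (rule pair_measure_distr[OF T_PiM]) (simp_all add: U_id U.sigma_finite_measure)
  also have "\<dots> = distr (sample_law n P) (outcome_space n) (\<lambda>\<omega>. (compose {..<n} T (fst \<omega>), snd \<omega>))"
    by (rule distr_cong) (auto simp: outcome_space_def P'_def intro!: sets_pair_measure_cong sets_PiM_cong)
  finally show ?thesis unfolding P'_def .
qed

lemma measure_sample_law_hits_le:
  fixes P :: "('a::euclidean_space \<times> real) measure"
  assumes P: "prob_space P" and sP: "sets P = sets borel" and U: "U \<in> sets borel"
  shows "(\<Union>i<n. {\<omega> \<in> space (sample_law n P). fst (fst \<omega> i) \<in> U}) \<in> sets (sample_law n P)"
    and "measure (sample_law n P) (\<Union>i<n. {\<omega> \<in> space (sample_law n P). fst (fst \<omega> i) \<in> U})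
      \<le> real n * measure (marginal P) U"
proof -
  interpret Q: prob_space "sample_law n P" by (rule prob_space_sample_law[OF P])
  have hit: "{\<omega> \<in> space (sample_law n P). fst (fst \<omega> i) \<in> U} \<in> sets (sample_law n P)"
    and hit_measure: "measure (sample_law n P) {\<omega> \<in> space (sample_law n P). fst (fst \<omega> i) \<in> U} =
      measure (marginal P) U" if "i < n" for i
  proof -
    have X: "(\<lambda>\<omega>. fst (fst \<omega> i)) \<in> sample_law n P \<rightarrow>\<^sub>M borel"
      by (rule measurable_sample_covariate[OF sP that])
    have eq: "{\<omega> \<in> space (sample_law n P). fst (fst \<omega> i) \<in> U} =
        (\<lambda>\<omega>. fst (fst \<omega> i)) -` U \<inter> space (sample_law n P)"
      by auto
    show "{\<omega> \<in> space (sample_law n P). fst (fst \<omega> i) \<in> U} \<in> sets (sample_law n P)"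
      unfolding eq using X U by (rule measurable_sets)
    show "measure (sample_law n P) {\<omega> \<in> space (sample_law n P). fst (fst \<omega> i) \<in> U} =
        measure (marginal P) U"
      unfolding eq measure_distr[OF X U, symmetric] distr_sample_covariate[OF P sP that] ..
  qed
  show "(\<Union>i<n. {\<omega> \<in> space (sample_law n P). fst (fst \<omega> i) \<in> U}) \<in> sets (sample_law n P)"
    using hit by auto
  have "measure (sample_law n P) (\<Union>i<n. {\<omega> \<in> space (sample_law n P). fst (fst \<omega> i) \<in> U})
      \<le> (\<Sum>i<n. measure (sample_law n P) {\<omega> \<in> space (sample_law n P). fst (fst \<omega> i) \<in> U})"
    using hit by (intro Q.finite_measure_subadditive_finite) auto
  also have "\<dots> = real n * measure (marginal P) U"
    using hit_measure by simp
  finally show "measure (sample_law n P) (\<Union>i<n. {\<omega> \<in> space (sample_law n P). fst (fst \<omega> i) \<in> U})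
      \<le> real n * measure (marginal P) U" .
qed

text \<open>Coupling: applying \<open>T\<close> to every observation changes the sample only on the event that
  some covariate falls into \<open>U\<close>.\<close>

lemma measure_sample_law_distr_le:
  fixes P :: "('a::euclidean_space \<times> real) measure"
  assumes P: "prob_space P" and sP: "sets P = sets borel" and T: "T \<in> borel \<rightarrow>\<^sub>M borel"
    and U: "U \<in> sets borel" and T_id: "\<And>z. fst z \<notin> U \<Longrightarrow> T z = z"
    and G: "G \<in> sets (outcome_space n)"
  shows "measure (sample_law n (distr P borel T)) G \<le>
    measure (sample_law n P) G + real n * measure (marginal P) U"
proof -
  define Q where "Q = sample_law n P"
  define F where "F = (\<lambda>\<omega>::'a outcome. (compose {..<n} T (fst \<omega>), snd \<omega>))"
  define Hit where "Hit = (\<Union>i<n. {\<omega> \<in> space Q. fst (fst \<omega> i) \<in> U})"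
  interpret Q: prob_space Q unfolding Q_def by (rule prob_space_sample_law[OF P])
  have sQ: "sets Q = sets (outcome_space n)" unfolding Q_def by (rule sets_sample_law[OF sP])
  have T_PiM: "compose {..<n} T \<in> (\<Pi>\<^sub>M i\<in>{..<n}. P) \<rightarrow>\<^sub>M (\<Pi>\<^sub>M i\<in>{..<n}. borel)"
    using T by (intro measurable_compose_PiM) (simp add: measurable_cong_sets[OF sP refl])
  have F: "F \<in> Q \<rightarrow>\<^sub>M outcome_space n"
    unfolding Q_def sample_law_def outcome_space_def F_def
    by (rule measurable_Pair) (auto intro!: measurable_compose[OF measurable_fst T_PiM] measurable_snd')
  have Hit: "Hit \<in> sets Q" and Hit_measure: "measure Q Hit \<le> real n * measure (marginal P) U"
    using measure_sample_law_hits_le[OF P sP U] by (simp_all add: Q_def Hit_def)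
  have "F -` G \<inter> space Q \<subseteq> G \<union> Hit"
  proof
    fix \<omega> assume \<omega>: "\<omega> \<in> F -` G \<inter> space Q"
    show "\<omega> \<in> G \<union> Hit"
    proof (cases "\<omega> \<in> Hit")
      case False
      have "fst \<omega> \<in> space (\<Pi>\<^sub>M i\<in>{..<n}. P)"
        using \<omega> by (auto simp: Q_def space_sample_law_eq_Times)
      then have "fst \<omega> \<in> extensional {..<n}" by (simp add: space_PiM PiE_iff)
      moreover have "T (fst \<omega> i) = fst \<omega> i" if "i < n" for i
      proof (rule T_id)
        show "fst (fst \<omega> i) \<notin> U" using False \<omega> that by (auto simp: Hit_def)
      qed
      ultimately have "compose {..<n} T (fst \<omega>) = fst \<omega>"
        by (auto simp: compose_def extensional_def)
      then show ?thesis using \<omega> by (simp add: F_def)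
    qed simp
  qed
  then have "measure Q (F -` G \<inter> space Q) \<le> measure Q (G \<union> Hit)"
    using G Hit sQ by (intro Q.finite_measure_mono) auto
  also have "\<dots> \<le> measure Q G + measure Q Hit"
    using G Hit sQ by (intro measure_Un_le) auto
  finally show ?thesis
    using sample_law_distr[OF P sP T] measure_distr[OF F G] Hit_measure by (simp add: Q_def F_def)
qed

section \<open>Covering while avoiding a finite set\<close>

lemma selection_set_mem_sets:
  assumes "Ah \<in> selection_sets n \<A>"
  shows "{\<omega> \<in> space (outcome_space n). s \<in> Ah \<omega>} \<in> sets (outcome_space n)"
proof -
  have "(\<lambda>(x, \<omega>). x \<in> Ah \<omega>) \<in> (borel :: 'a measure) \<Otimes>\<^sub>M outcome_space n \<rightarrow>\<^sub>M count_space UNIV"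
    using assms by (simp add: selection_sets_def)
  then have "(\<lambda>\<omega>. s \<in> Ah \<omega>) \<in> outcome_space n \<rightarrow>\<^sub>M count_space UNIV"
    using measurable_compose[OF measurable_Pair1'[of s borel]] by simp
  from measurable_sets[OF this, of "{True}"] show ?thesis
    by (simp add: vimage_def Int_def conj_commute)
qed

lemma selection_set_disjoint_sets:
  assumes "Ah \<in> selection_sets n \<A>" and "finite S"
  shows "{\<omega> \<in> space (outcome_space n). Ah \<omega> \<inter> S = {}} \<in> sets (outcome_space n)"
proof -
  have "{\<omega> \<in> space (outcome_space n). \<forall>s\<in>S. s \<notin> Ah \<omega>} \<in> sets (outcome_space n)"
  proof (rule sets.sets_Collect_finite_All[OF _ assms(2)])
    fix s
    have "{\<omega> \<in> space (outcome_space n). s \<notin> Ah \<omega>} =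
        space (outcome_space n) - {\<omega> \<in> space (outcome_space n). s \<in> Ah \<omega>}"
      by auto
    then show "{\<omega> \<in> space (outcome_space n). s \<notin> Ah \<omega>} \<in> sets (outcome_space n)"
      using selection_set_mem_sets[OF assms(1)] by auto
  qed
  moreover have "{\<omega> \<in> space (outcome_space n). \<forall>s\<in>S. s \<notin> Ah \<omega>} =
      {\<omega> \<in> space (outcome_space n). Ah \<omega> \<inter> S = {}}"
    by auto
  ultimately show ?thesis by simp
qed

lemma selection_set_not_mem_pair_sets:
  assumes "Ah \<in> selection_sets n \<A>"
    and sQ: "sets Q = sets (outcome_space n)" and s\<mu>: "sets \<mu> = sets (borel :: 'a::euclidean_space measure)"
  shows "{p \<in> space (Q \<Otimes>\<^sub>M \<mu>). snd p \<notin> Ah (fst p)} \<in> sets (Q \<Otimes>\<^sub>M \<mu>)"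
proof -
  have "(\<lambda>(x, \<omega>). x \<in> Ah \<omega>) \<in> (borel :: 'a measure) \<Otimes>\<^sub>M outcome_space n \<rightarrow>\<^sub>M count_space UNIV"
    using assms(1) by (simp add: selection_sets_def)
  moreover have "snd \<in> Q \<Otimes>\<^sub>M \<mu> \<rightarrow>\<^sub>M (borel :: 'a measure)"
    by (subst measurable_cong_sets[OF refl s\<mu>[symmetric]]) (rule measurable_snd)
  moreover have "fst \<in> Q \<Otimes>\<^sub>M \<mu> \<rightarrow>\<^sub>M outcome_space n"
    by (subst measurable_cong_sets[OF refl sQ[symmetric]]) (rule measurable_fst)
  ultimately have "(\<lambda>p. snd p \<in> Ah (fst p)) \<in> Q \<Otimes>\<^sub>M \<mu> \<rightarrow>\<^sub>M count_space UNIV"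
    using measurable_compose[OF measurable_Pair] by fastforce
  from measurable_sets[OF this, of "{False}"] show ?thesis
    by (simp add: vimage_def Int_def conj_commute)
qed

lemma lipschitz_on_infdist_ramp:
  fixes S :: "'a::metric_space set"
  assumes "0 < r"
  shows "(1 / r)-lipschitz_on UNIV (\<lambda>x. min 1 (infdist x S / r))"
proof (rule lipschitz_onI)
  fix x y :: 'a
  have "\<bar>min 1 (infdist x S / r) - min 1 (infdist y S / r)\<bar> \<le> \<bar>infdist x S / r - infdist y S / r\<bar>"
    by linarith
  also have "\<dots> = \<bar>infdist x S - infdist y S\<bar> / r"
    using assms by (simp add: diff_divide_distrib[symmetric] abs_divide)
  also have "\<dots> \<le> dist x y / r"
    using infdist_triangle_abs[of x S y] assms by (simp add: divide_right_mono)
  finally show "dist (min 1 (infdist x S / r)) (min 1 (infdist y S / r)) \<le> 1 / r * dist x y"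
    by (simp add: dist_real_def)
qed (use assms in simp)

lemma cover_event_label_scaling_subset:
  assumes "0 < \<tau>" and "\<And>x. x \<in> S \<Longrightarrow> h x = 0" and "\<And>x. 0 \<le> h x \<and> h x \<le> 1"
  shows "cover_event n Ah (\<lambda>x. h x * clip01 (eta x)) \<tau> \<subseteq>
    cover_event n Ah eta \<tau> \<inter> {\<omega> \<in> space (outcome_space n). Ah \<omega> \<inter> S = {}}"
proof
  fix \<omega> assume "\<omega> \<in> cover_event n Ah (\<lambda>x. h x * clip01 (eta x)) \<tau>"
  then have \<omega>: "\<omega> \<in> space (outcome_space n)" and
    sub: "\<And>x. x \<in> Ah \<omega> \<Longrightarrow> \<tau> \<le> h x * clip01 (eta x)"
    by (auto simp: cover_event_def superlevel_def)
  have "\<tau> \<le> eta x" if "x \<in> Ah \<omega>" for x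
  proof -
    have "\<tau> \<le> clip01 (eta x)"
      using sub[OF that] assms(3)[of x] clip01_bounds[of "eta x"]
      by (meson order.trans mult_left_le_one_le)
    then show ?thesis using assms(1) by (auto simp: clip01_def)
  qed
  moreover have "Ah \<omega> \<inter> S = {}"
    using sub assms(1,2) by fastforce
  ultimately show "\<omega> \<in> cover_event n Ah eta \<tau> \<inter> {\<omega> \<in> space (outcome_space n). Ah \<omega> \<inter> S = {}}"
    using \<omega> by (auto simp: cover_event_def superlevel_def)
qed

text \<open>Damping the labels near \<open>S\<close> gives a law in the model whose \<open>\<tau>\<close>-superlevel set misses \<open>S\<close>,
  while the sample law changes only on the event that a covariate lands within distance \<open>r\<close> of \<open>S\<close>.\<close>

lemma cover_avoid_ge_nbhd:
  fixes \<mu> :: "'a::euclidean_space measure"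
  assumes \<tau>: "0 < \<tau>" and Ah: "Ah \<in> Ahat n \<tau> \<alpha> \<A> (P_Lip \<mu>)" and PL: "(P, eta) \<in> P_Lip \<mu>"
    and S: "finite S" and r: "0 < r"
  shows "1 - \<alpha> - real n * measure \<mu> {x. infdist x S < r} \<le>
    measure (sample_law n P) (cover_event n Ah eta \<tau> \<inter> {\<omega> \<in> space (sample_law n P). Ah \<omega> \<inter> S = {}})"
proof -
  have D: "is_distribution P" and mP: "marginal P = \<mu>" using PL by (auto simp: P_Lip_def)
  note P = is_distributionD(1,2)[OF D]
  define Q where "Q = sample_law n P"
  interpret Q: prob_space Q unfolding Q_def by (rule prob_space_sample_law[OF P(1)])
  have sQ: "sets Q = sets (outcome_space n)" and spQ: "space Q = space (outcome_space n)"
    unfolding Q_def by (rule sets_sample_law[OF P(2)], rule space_sample_law[OF P(2)])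
  define h where "h = (\<lambda>x::'a. min 1 (infdist x S / r))"
  define T where "T = label_scaling h"
  define U where "U = {x::'a. infdist x S < r}"
  have hL: "(1 / r)-lipschitz_on UNIV h" unfolding h_def by (rule lipschitz_on_infdist_ramp[OF r])
  have h01: "0 \<le> h x \<and> h x \<le> 1" for x using r by (auto simp: h_def infdist_nonneg)
  have h0: "h x = 0" if "x \<in> S" for x using that by (simp add: h_def)
  have T: "T \<in> borel \<rightarrow>\<^sub>M borel"
    unfolding T_def by (rule borel_measurable_label_scaling[OF lipschitz_on_continuous_on[OF hL]])
  have [measurable]: "(\<lambda>x. infdist x S) \<in> borel_measurable (borel :: 'a measure)"
    by (intro borel_measurable_continuous_onI continuous_intros)
  have U: "U \<in> sets borel" unfolding U_def by measurable
  have T_id: "T z = z" if "fst z \<notin> U" for z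
  proof -
    have "h (fst z) = 1" using that r by (simp add: h_def U_def)
    then show ?thesis by (simp add: T_def label_scaling_def)
  qed
  define C' where "C' = cover_event n Ah (\<lambda>x. h x * clip01 (eta x)) \<tau>"
  have "(distr P borel T, \<lambda>x. h x * clip01 (eta x)) \<in> P_Lip \<mu>"
    unfolding T_def by (rule label_scaling_in_P_Lip[OF PL hL h01])
  then have "C' \<in> sets (sample_law n (distr P borel T)) \<and> 1 - \<alpha> \<le> measure (sample_law n (distr P borel T)) C'"
    using Ah unfolding Ahat_def C'_def by blast
  then have C': "C' \<in> sets (outcome_space n)" "1 - \<alpha> \<le> measure (sample_law n (distr P borel T)) C'"
    using sets_sample_law[of "distr P borel T" n] by auto
  have "1 - \<alpha> - real n * measure \<mu> U \<le> measure Q C'"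
    using measure_sample_law_distr_le[OF P T U T_id C'(1)] C'(2) unfolding mP Q_def by linarith
  also have "\<dots> \<le> measure Q (cover_event n Ah eta \<tau> \<inter> {\<omega> \<in> space Q. Ah \<omega> \<inter> S = {}})"
  proof (rule Q.finite_measure_mono)
    show "C' \<subseteq> cover_event n Ah eta \<tau> \<inter> {\<omega> \<in> space Q. Ah \<omega> \<inter> S = {}}"
      unfolding C'_def spQ by (rule cover_event_label_scaling_subset[OF \<tau> h0 h01])
    have "cover_event n Ah eta \<tau> \<in> sets Q" using Ah PL by (auto simp: Ahat_def Q_def)
    moreover have "{\<omega> \<in> space Q. Ah \<omega> \<inter> S = {}} \<in> sets Q"
      using selection_set_disjoint_sets[OF _ S] Ah by (auto simp: Ahat_def sQ spQ)
    ultimately show "cover_event n Ah eta \<tau> \<inter> {\<omega> \<in> space Q. Ah \<omega> \<inter> S = {}} \<in> sets Q" by blast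
  qed
  finally show ?thesis by (simp add: Q_def U_def)
qed

lemma measure_infdist_lt_tendsto:
  fixes S :: "'a::euclidean_space set"
  assumes "finite_measure \<mu>" "sets \<mu> = sets borel" and "finite S" "S \<noteq> {}"
  shows "(\<lambda>m. measure \<mu> {x. infdist x S < 1 / Suc m}) \<longlonglongrightarrow> measure \<mu> S"
proof -
  interpret finite_measure \<mu> by fact
  define V where "V = (\<lambda>m::nat. {x::'a. infdist x S < 1 / Suc m})"
  have [measurable]: "(\<lambda>x. infdist x S) \<in> borel_measurable (borel :: 'a measure)"
    by (intro borel_measurable_continuous_onI continuous_intros)
  have "V m \<in> sets borel" for m unfolding V_def by measurable
  then have "range V \<subseteq> sets \<mu>" using assms(2) by auto
  moreover have "decseq V"
  proof (rule decseq_SucI)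
    fix m show "V (Suc m) \<subseteq> V m"
      unfolding V_def by (auto simp: frac_le elim!: less_le_trans)
  qed
  moreover have "(\<Inter>m. V m) = S"
  proof
    show "S \<subseteq> (\<Inter>m. V m)" by (auto simp: V_def)
    show "(\<Inter>m. V m) \<subseteq> S"
    proof
      fix x assume x: "x \<in> (\<Inter>m. V m)"
      have "infdist x S = 0"
      proof (rule ccontr)
        assume "infdist x S \<noteq> 0"
        then have "infdist x S > 0" using infdist_nonneg[of x S] by simp
        then obtain m where "inverse (real (Suc m)) < infdist x S"
          using reals_Archimedean by blast
        moreover have "infdist x S < 1 / real (Suc m)" using x by (auto simp: V_def)
        ultimately show False by (simp add: inverse_eq_divide)
      qed
      then have "x \<in> closure S" using in_closure_iff_infdist_zero[OF assms(4)] by simp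
      then show "x \<in> S" using finite_imp_closed[OF assms(3)] by (simp add: closure_closed)
    qed
  qed
  ultimately show ?thesis
    using finite_Lim_measure_decseq[of V] by (simp add: V_def)
qed

lemma cover_avoid_ge:
  fixes \<mu> :: "'a::euclidean_space measure"
  assumes \<tau>: "0 < \<tau>" and \<mu>: "prob_space \<mu>" "sets \<mu> = sets borel" "\<forall>x. measure \<mu> {x} = 0"
    and Ah: "Ah \<in> Ahat n \<tau> \<alpha> \<A> (P_Lip \<mu>)" and PL: "(P, eta) \<in> P_Lip \<mu>" and S: "finite S"
  shows "1 - \<alpha> \<le>
    measure (sample_law n P) (cover_event n Ah eta \<tau> \<inter> {\<omega> \<in> space (sample_law n P). Ah \<omega> \<inter> S = {}})"
proof (cases "S = {}")
  case True
  have "sets P = sets borel" using PL by (auto simp: P_Lip_def is_distribution_def)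
  then have "cover_event n Ah eta \<tau> \<subseteq> space (sample_law n P)"
    by (auto simp: cover_event_def space_sample_law)
  moreover have "1 - \<alpha> \<le> measure (sample_law n P) (cover_event n Ah eta \<tau>)"
    using Ah PL unfolding Ahat_def by blast
  ultimately show ?thesis using True by (simp add: Int_absorb2)
next
  case False
  interpret prob_space \<mu> by (rule \<mu>(1))
  have "measure \<mu> (\<Union>s\<in>S. {s}) \<le> (\<Sum>s\<in>S. measure \<mu> {s})"
    by (rule measure_UNION_le[OF S]) (simp add: \<mu>(2))
  then have "measure \<mu> S = 0" using \<mu>(3) measure_nonneg[of \<mu> S] by simp
  then have "(\<lambda>m. 1 - \<alpha> - real n * measure \<mu> {x. infdist x S < 1 / Suc m}) \<longlonglongrightarrow> 1 - \<alpha> - real n * 0"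
    using measure_infdist_lt_tendsto[OF finite_measure_axioms \<mu>(2) S False]
    by (intro tendsto_intros) simp
  then show ?thesis
    using cover_avoid_ge_nbhd[OF \<tau> Ah PL S] by (intro LIMSEQ_le_const2) auto
qed

section \<open>Random sets that avoid every finite set are null\<close>

lemma INF_ennreal_power_eq_0:
  fixes r :: real
  assumes "0 \<le> r" "r < 1"
  shows "(INF k. ennreal r ^ k) = 0"
proof -
  have "decseq (\<lambda>k. ennreal r ^ k)"
  proof (rule decseq_SucI)
    fix k
    have "ennreal r ^ Suc k = ennreal r ^ k * ennreal r" by (rule power_Suc2)
    also have "\<dots> \<le> ennreal r ^ k * 1" by (rule mult_left_mono) (use assms in auto)
    finally show "ennreal r ^ Suc k \<le> ennreal r ^ k" by simp
  qed
  then have "(\<lambda>k. ennreal r ^ k) \<longlonglongrightarrow> (INF k. ennreal r ^ k)" by (rule LIMSEQ_INF)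
  moreover have "(\<lambda>k. ennreal r ^ k) \<longlonglongrightarrow> 0"
    using tendsto_ennrealI[OF LIMSEQ_power_zero[of r]] assms by (simp add: ennreal_power)
  ultimately show ?thesis by (rule LIMSEQ_unique)
qed

context
  fixes Q :: "'b measure" and \<mu> :: "'a measure" and G :: "'b \<Rightarrow> 'a set"
  assumes prob_Q: "prob_space Q" and prob_\<mu>: "prob_space \<mu>"
    and sets_G: "\<And>\<omega>. \<omega> \<in> space Q \<Longrightarrow> G \<omega> \<in> sets \<mu>"
    and sets_not_in_G: "{p \<in> space (Q \<Otimes>\<^sub>M \<mu>). snd p \<notin> G (fst p)} \<in> sets (Q \<Otimes>\<^sub>M \<mu>)"
begin

interpretation Q: prob_space Q by (rule prob_Q)
interpretation \<mu>: prob_space \<mu> by (rule prob_\<mu>)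
interpretation Q\<mu>: pair_sigma_finite Q \<mu> ..

lemma vimage_Pair_not_in_G:
  "\<omega> \<in> space Q \<Longrightarrow> Pair \<omega> -` {p \<in> space (Q \<Otimes>\<^sub>M \<mu>). snd p \<notin> G (fst p)} = space \<mu> - G \<omega>"
  by (auto simp: space_pair_measure)

lemma measurable_emeasure_compl_G:
  "(\<lambda>\<omega>. emeasure \<mu> (space \<mu> - G \<omega>)) \<in> borel_measurable Q"
proof -
  have "(\<lambda>\<omega>. emeasure \<mu> (Pair \<omega> -` {p \<in> space (Q \<Otimes>\<^sub>M \<mu>). snd p \<notin> G (fst p)})) \<in> borel_measurable Q"
    by (rule Q\<mu>.measurable_emeasure_Pair1[OF sets_not_in_G])
  also have "?this \<longleftrightarrow> ?thesis"
    by (rule measurable_cong) (simp only: vimage_Pair_not_in_G)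
  finally show ?thesis .
qed

lemma emeasure_compl_G: "\<omega> \<in> space Q \<Longrightarrow> emeasure \<mu> (space \<mu> - G \<omega>) = ennreal (1 - measure \<mu> (G \<omega>))"
  using \<mu>.prob_compl[OF sets_G] by (simp add: \<mu>.emeasure_eq_measure)

lemma sets_avoid_G:
  assumes "finite S" "S \<subseteq> space \<mu>"
  shows "{\<omega> \<in> space Q. G \<omega> \<inter> S = {}} \<in> sets Q"
proof -
  have "{\<omega> \<in> space Q. x \<notin> G \<omega>} \<in> sets Q" if "x \<in> space \<mu>" for x
  proof -
    have "(\<lambda>\<omega>. (\<omega>, x)) -` {p \<in> space (Q \<Otimes>\<^sub>M \<mu>). snd p \<notin> G (fst p)} \<in> sets Q"
      by (rule sets_Pair2[OF sets_not_in_G])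
    moreover have "(\<lambda>\<omega>. (\<omega>, x)) -` {p \<in> space (Q \<Otimes>\<^sub>M \<mu>). snd p \<notin> G (fst p)} = {\<omega> \<in> space Q. x \<notin> G \<omega>}"
      using that by (auto simp: space_pair_measure)
    ultimately show ?thesis by simp
  qed
  then have "{\<omega> \<in> space Q. \<forall>x\<in>S. x \<notin> G \<omega>} \<in> sets Q"
    using assms by (intro sets.sets_Collect_finite_All) auto
  moreover have "{\<omega> \<in> space Q. \<forall>x\<in>S. x \<notin> G \<omega>} = {\<omega> \<in> space Q. G \<omega> \<inter> S = {}}"
    by auto
  ultimately show ?thesis by simp
qed

lemma emeasure_compl_G_le_1: "\<omega> \<in> space Q \<Longrightarrow> emeasure \<mu> (space \<mu> - G \<omega>) \<le> 1"
  using emeasure_compl_G measure_nonneg[of \<mu> "G \<omega>"] by simp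

lemma INF_power_emeasure_compl_G:
  assumes "\<omega> \<in> space Q"
  shows "(INF k. emeasure \<mu> (space \<mu> - G \<omega>) ^ k) = (if measure \<mu> (G \<omega>) = 0 then 1 else 0)"
proof (cases "measure \<mu> (G \<omega>) = 0")
  case False
  then have "0 < measure \<mu> (G \<omega>)" using measure_nonneg[of \<mu> "G \<omega>"] by linarith
  then show ?thesis
    using False emeasure_compl_G[OF assms] by (simp add: INF_ennreal_power_eq_0)
qed (simp add: emeasure_compl_G[OF assms])

text \<open>Fubini: weighting by the \<open>\<mu>\<close>-mass outside \<open>G\<close> is averaging over an extra point \<open>x \<sim> \<mu>\<close>
  that \<open>G\<close> has to avoid.\<close>

lemma nn_integral_mult_emeasure_compl_G:
  assumes [measurable]: "D \<in> sets Q" "g \<in> borel_measurable Q"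
  shows "(\<integral>\<^sup>+\<omega>. indicator D \<omega> * g \<omega> * emeasure \<mu> (space \<mu> - G \<omega>) \<partial>Q) =
    (\<integral>\<^sup>+x. (\<integral>\<^sup>+\<omega>. indicator (D \<inter> {\<omega> \<in> space Q. x \<notin> G \<omega>}) \<omega> * g \<omega> \<partial>Q) \<partial>\<mu>)"
proof -
  define Z where "Z = {p \<in> space (Q \<Otimes>\<^sub>M \<mu>). snd p \<notin> G (fst p)}"
  define f where "f = (\<lambda>p. indicator D (fst p) * g (fst p) * indicator Z p :: ennreal)"
  have [measurable]: "Z \<in> sets (Q \<Otimes>\<^sub>M \<mu>)" using sets_not_in_G by (simp add: Z_def)
  have Z: "indicator Z (\<omega>, x) = (indicator (space \<mu> - G \<omega>) x :: ennreal)" if "\<omega> \<in> space Q" for \<omega> x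
    using vimage_Pair_not_in_G[OF that] by (auto simp: Z_def indicator_def)
  have "(\<integral>\<^sup>+\<omega>. indicator D \<omega> * g \<omega> * emeasure \<mu> (space \<mu> - G \<omega>) \<partial>Q) = (\<integral>\<^sup>+\<omega>. (\<integral>\<^sup>+x. f (\<omega>, x) \<partial>\<mu>) \<partial>Q)"
  proof (rule nn_integral_cong)
    fix \<omega> assume \<omega>: "\<omega> \<in> space Q"
    show "indicator D \<omega> * g \<omega> * emeasure \<mu> (space \<mu> - G \<omega>) = (\<integral>\<^sup>+x. f (\<omega>, x) \<partial>\<mu>)"
      using sets_G[OF \<omega>] by (simp add: f_def Z[OF \<omega>] nn_integral_cmult_indicator)
  qed
  also have "\<dots> = (\<integral>\<^sup>+x. (\<integral>\<^sup>+\<omega>. f (\<omega>, x) \<partial>Q) \<partial>\<mu>)"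
    by (rule Q\<mu>.Fubini[symmetric]) (simp add: f_def)
  also have "\<dots> = (\<integral>\<^sup>+x. (\<integral>\<^sup>+\<omega>. indicator (D \<inter> {\<omega> \<in> space Q. x \<notin> G \<omega>}) \<omega> * g \<omega> \<partial>Q) \<partial>\<mu>)"
  proof (intro nn_integral_cong)
    fix x \<omega> assume x: "x \<in> space \<mu>" and \<omega>: "\<omega> \<in> space Q"
    show "f (\<omega>, x) = indicator (D \<inter> {\<omega> \<in> space Q. x \<notin> G \<omega>}) \<omega> * g \<omega>"
      unfolding f_def fst_conv Z[OF \<omega>] using \<omega> x by (auto simp: indicator_def)
  qed
  finally show ?thesis .
qed

lemma nn_integral_avoid_power_ge:
  assumes C: "C \<in> sets Q"
    and avoid: "\<And>S. finite S \<Longrightarrow> S \<subseteq> space \<mu> \<Longrightarrow> p \<le> measure Q (C \<inter> {\<omega> \<in> space Q. G \<omega> \<inter> S = {}})"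
    and S: "finite S" "S \<subseteq> space \<mu>"
  shows "ennreal p \<le> (\<integral>\<^sup>+\<omega>. indicator (C \<inter> {\<omega> \<in> space Q. G \<omega> \<inter> S = {}}) \<omega> *
      emeasure \<mu> (space \<mu> - G \<omega>) ^ k \<partial>Q)"
  using S
proof (induction k arbitrary: S)
  case 0
  have "C \<inter> {\<omega> \<in> space Q. G \<omega> \<inter> S = {}} \<in> sets Q" using C sets_avoid_G[OF 0] by blast
  then show ?case
    using avoid[OF 0] by (simp add: Q.emeasure_eq_measure)
next
  case (Suc k)
  define D where "D = (\<lambda>S. C \<inter> {\<omega> \<in> space Q. G \<omega> \<inter> S = {}})"
  have "D x \<in> sets Q" if "finite x" "x \<subseteq> space \<mu>" for x
    using C sets_avoid_G[OF that] by (auto simp: D_def)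
  then have "(\<integral>\<^sup>+\<omega>. indicator (D S) \<omega> * emeasure \<mu> (space \<mu> - G \<omega>) ^ Suc k \<partial>Q) =
      (\<integral>\<^sup>+x. (\<integral>\<^sup>+\<omega>. indicator (D S \<inter> {\<omega> \<in> space Q. x \<notin> G \<omega>}) \<omega> *
        emeasure \<mu> (space \<mu> - G \<omega>) ^ k \<partial>Q) \<partial>\<mu>)"
    using nn_integral_mult_emeasure_compl_G[of "D S" "\<lambda>\<omega>. emeasure \<mu> (space \<mu> - G \<omega>) ^ k"]
      measurable_emeasure_compl_G Suc.prems by (simp add: mult.assoc mult.commute[of "_ ^ k"])
  also have "\<dots> \<ge> (\<integral>\<^sup>+x. ennreal p \<partial>\<mu>)"
  proof (rule nn_integral_mono)
    fix x assume "x \<in> space \<mu>"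
    then have "D S \<inter> {\<omega> \<in> space Q. x \<notin> G \<omega>} = D (insert x S)" by (auto simp: D_def)
    then show "ennreal p \<le> (\<integral>\<^sup>+\<omega>. indicator (D S \<inter> {\<omega> \<in> space Q. x \<notin> G \<omega>}) \<omega> *
        emeasure \<mu> (space \<mu> - G \<omega>) ^ k \<partial>Q)"
      using Suc.IH[of "insert x S"] Suc.prems \<open>x \<in> space \<mu>\<close> by (simp add: D_def)
  qed
  finally show ?case by (simp add: \<mu>.emeasure_space_1 D_def)
qed

text \<open>Letting \<open>k \<rightarrow> \<infinity>\<close>: the weight \<open>(1 - \<mu> G)\<^sup>k\<close> decreases to the indicator of \<open>\<mu> G = 0\<close>.\<close>

lemma prob_null_ge_of_prob_avoid_ge:
  assumes C: "C \<in> sets Q"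
    and avoid: "\<And>S. finite S \<Longrightarrow> S \<subseteq> space \<mu> \<Longrightarrow> p \<le> measure Q (C \<inter> {\<omega> \<in> space Q. G \<omega> \<inter> S = {}})"
  shows "{\<omega> \<in> space Q. measure \<mu> (G \<omega>) = 0} \<in> sets Q"
    and "p \<le> measure Q ({\<omega> \<in> space Q. measure \<mu> (G \<omega>) = 0} \<inter> C)"
proof -
  define e where "e = (\<lambda>\<omega>. emeasure \<mu> (space \<mu> - G \<omega>))"
  define E where "E = {\<omega> \<in> space Q. measure \<mu> (G \<omega>) = 0}"
  define g where "g = (\<lambda>k \<omega>. indicator C \<omega> * e \<omega> ^ k :: ennreal)"
  have [measurable]: "e \<in> borel_measurable Q" "C \<in> sets Q"
    using measurable_emeasure_compl_G C by (simp_all add: e_def)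
  have "E = e -` {1} \<inter> space Q"
    using emeasure_compl_G measure_nonneg[of \<mu> "G _"] by (auto simp: E_def e_def)
  then show E: "E \<in> sets Q" unfolding E_def[symmetric] by simp
  have "decseq g"
  proof (intro decseq_SucI le_funI)
    fix k \<omega>
    have "e \<omega> ^ k * e \<omega> \<le> e \<omega> ^ k * 1" if "\<omega> \<in> space Q"
      using emeasure_compl_G_le_1[OF that] by (intro mult_left_mono) (auto simp: e_def)
    then show "g (Suc k) \<omega> \<le> g k \<omega>"
      using sets.sets_into_space[OF C] by (auto simp: g_def indicator_def mult.commute)
  qed
  moreover have "(\<integral>\<^sup>+\<omega>. g k \<omega> \<partial>Q) < \<infinity>" for k
  proof -
    have "(\<integral>\<^sup>+\<omega>. g k \<omega> \<partial>Q) \<le> (\<integral>\<^sup>+\<omega>. 1 \<partial>Q)"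
      using emeasure_compl_G_le_1
      by (intro nn_integral_mono) (auto simp: g_def e_def indicator_def power_le_one)
    then show ?thesis using Q.emeasure_space_1 by (simp add: top.not_eq_extremum le_less_trans)
  qed
  ultimately have "(\<integral>\<^sup>+\<omega>. (INF k. g k \<omega>) \<partial>Q) = (INF k. (\<integral>\<^sup>+\<omega>. g k \<omega> \<partial>Q))"
    by (intro nn_integral_monotone_convergence_INF_decseq) (simp_all add: g_def)
  moreover have "(INF k. g k \<omega>) = indicator (E \<inter> C) \<omega>" if "\<omega> \<in> space Q" for \<omega>
    using INF_power_emeasure_compl_G[OF that] that
    by (cases "\<omega> \<in> C") (simp_all add: g_def e_def E_def)
  moreover have "ennreal p \<le> (\<integral>\<^sup>+\<omega>. g k \<omega> \<partial>Q)" for k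
    using nn_integral_avoid_power_ge[OF C avoid, of "{}" k] sets.sets_into_space[OF C]
    by (simp add: g_def e_def Int_absorb2)
  ultimately have "ennreal p \<le> (\<integral>\<^sup>+\<omega>. indicator (E \<inter> C) \<omega> \<partial>Q)"
    by (simp add: le_INF_iff cong: nn_integral_cong)
  then show "p \<le> measure Q (E \<inter> C)"
    using E C by (simp add: Q.emeasure_eq_measure)
qed
end

lemma prob_null_cover_ge:
  fixes \<mu> :: "'a::euclidean_space measure"
  assumes \<tau>: "0 < \<tau>" and \<mu>: "prob_space \<mu>" "sets \<mu> = sets borel" "\<forall>x. measure \<mu> {x} = 0"
    and \<A>: "\<A> \<subseteq> sets borel" and Ah: "Ah \<in> Ahat n \<tau> \<alpha> \<A> (P_Lip \<mu>)" and PL: "(P, eta) \<in> P_Lip \<mu>"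
  shows "{\<omega> \<in> space (sample_law n P). measure \<mu> (Ah \<omega>) = 0} \<in> sets (sample_law n P)"
    and "1 - \<alpha> \<le> measure (sample_law n P)
      ({\<omega> \<in> space (sample_law n P). measure \<mu> (Ah \<omega>) = 0} \<inter> cover_event n Ah eta \<tau>)"
proof -
  have D: "is_distribution P" using PL by (simp add: P_Lip_def)
  note P = is_distributionD(1,2)[OF D]
  have sel: "Ah \<in> selection_sets n \<A>" using Ah by (simp add: Ahat_def)
  have Q: "prob_space (sample_law n P)" by (rule prob_space_sample_law[OF P(1)])
  have sets_Ah: "Ah \<omega> \<in> sets \<mu>" if "\<omega> \<in> space (sample_law n P)" for \<omega>
    using sel that \<A> \<mu>(2) by (auto simp: selection_sets_def space_sample_law[OF P(2)])
  have not_in_Ah: "{p \<in> space (sample_law n P \<Otimes>\<^sub>M \<mu>). snd p \<notin> Ah (fst p)} \<in> sets (sample_law n P \<Otimes>\<^sub>M \<mu>)"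
    by (rule selection_set_not_mem_pair_sets[OF sel sets_sample_law[OF P(2)] \<mu>(2)])
  have C: "cover_event n Ah eta \<tau> \<in> sets (sample_law n P)"
    using Ah PL unfolding Ahat_def by blast
  have avoid: "1 - \<alpha> \<le> measure (sample_law n P)
      (cover_event n Ah eta \<tau> \<inter> {\<omega> \<in> space (sample_law n P). Ah \<omega> \<inter> S = {}})" if "finite S" for S
    by (rule cover_avoid_ge[OF \<tau> \<mu> Ah PL that])
  note null = prob_null_ge_of_prob_avoid_ge[OF Q \<mu>(1) sets_Ah not_in_Ah C avoid]
  show "{\<omega> \<in> space (sample_law n P). measure \<mu> (Ah \<omega>) = 0} \<in> sets (sample_law n P)"
    by (rule null(1))
  show "1 - \<alpha> \<le> measure (sample_law n P)
      ({\<omega> \<in> space (sample_law n P). measure \<mu> (Ah \<omega>) = 0} \<inter> cover_event n Ah eta \<tau>)"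
    by (rule null(2))
qed

section \<open>Regret\<close>

lemma
  assumes "prob_space (marginal P)" and "{} \<in> \<A>"
  shows M_tau_nonneg: "0 \<le> M_tau \<tau> P eta \<A>"
    and measure_le_M_tau:
      "\<And>A. A \<in> \<A> \<Longrightarrow> A \<subseteq> superlevel eta \<tau> \<Longrightarrow> measure (marginal P) A \<le> M_tau \<tau> P eta \<A>"
    and M_tau_approx:
      "\<And>\<epsilon>. 0 < \<epsilon> \<Longrightarrow> \<exists>A\<in>\<A>. A \<subseteq> superlevel eta \<tau> \<and> M_tau \<tau> P eta \<A> - \<epsilon> < measure (marginal P) A"
proof -
  interpret prob_space "marginal P" by fact
  define V where "V = {measure (marginal P) A | A. A \<in> \<A> \<and> A \<subseteq> superlevel eta \<tau>}"
  have M: "M_tau \<tau> P eta \<A> = Sup V" by (simp add: M_tau_def V_def)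
  have bdd: "bdd_above V" unfolding V_def by (rule bdd_aboveI[where M=1]) auto
  have "0 \<in> V" unfolding V_def using assms(2) by force
  then show "0 \<le> M_tau \<tau> P eta \<A>" unfolding M by (rule cSup_upper[OF _ bdd])
  show "\<And>A. A \<in> \<A> \<Longrightarrow> A \<subseteq> superlevel eta \<tau> \<Longrightarrow> measure (marginal P) A \<le> M_tau \<tau> P eta \<A>"
    unfolding M by (rule cSup_upper[OF _ bdd]) (auto simp: V_def)
  show "\<exists>A\<in>\<A>. A \<subseteq> superlevel eta \<tau> \<and> M_tau \<tau> P eta \<A> - \<epsilon> < measure (marginal P) A"
    if "0 < \<epsilon>" for \<epsilon>
  proof -
    have "Sup V - \<epsilon> < Sup V" using that by simp
    then obtain v where "v \<in> V" "Sup V - \<epsilon> < v"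
      using less_cSupE[of "Sup V - \<epsilon>" V] \<open>0 \<in> V\<close> by blast
    then show ?thesis unfolding M V_def by auto
  qed
qed

lemma cond_prob_ge_measure_Int:
  assumes "prob_space Q" "C \<in> sets Q" "0 < measure Q C"
  shows "measure Q (E \<inter> C) \<le> cond_prob Q E C"
proof -
  interpret prob_space Q by fact
  have "measure Q (E \<inter> C) * measure Q C \<le> measure Q (E \<inter> C) * 1"
    by (intro mult_left_mono) simp_all
  then show ?thesis using assms(3) by (simp add: cond_prob_def le_divide_eq)
qed

lemma regret_ge_of_prob_null_cover_ge:
  fixes P :: "('a::euclidean_space \<times> real) measure" and n :: nat
    and Ah :: "'a outcome \<Rightarrow> 'a set" and eta :: "'a \<Rightarrow> real" and \<tau> :: real
  defines "Q \<equiv> sample_law n P"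
    and "C \<equiv> cover_event n Ah eta \<tau>"
    and "E \<equiv> {\<omega> \<in> space (sample_law n P). measure (marginal P) (Ah \<omega>) = 0}"
  assumes Q: "prob_space Q" and marg: "prob_space (marginal P)" and "{} \<in> \<A>"
    and sel: "\<And>\<omega>. \<omega> \<in> space Q \<Longrightarrow> Ah \<omega> \<in> \<A>"
    and C: "C \<in> sets Q" and E: "E \<in> sets Q"
    and \<alpha>: "\<alpha> < 1" and null: "1 - \<alpha> \<le> measure Q (E \<inter> C)"
  shows "(1 - \<alpha>) * M_tau \<tau> P eta \<A> \<le> regret n \<tau> Ah P eta \<A>"
proof -
  interpret Q: prob_space Q by (rule Q)
  define M where "M = M_tau \<tau> P eta \<A>"
  have M: "0 \<le> M" unfolding M_def by (rule M_tau_nonneg[OF marg \<open>{} \<in> \<A>\<close>])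
  have "measure Q (E \<inter> C) \<le> measure Q C" using C by (intro Q.finite_measure_mono) auto
  then have pos: "0 < measure Q C" using \<alpha> null by linarith
  have "(\<integral>\<omega>. indicator C \<omega> * measure (marginal P) (Ah \<omega>) \<partial>Q) \<le> (\<integral>\<omega>. M * indicator (C - E) \<omega> \<partial>Q)"
  proof (rule integral_mono')
    show "integrable Q (\<lambda>\<omega>. M * indicator (C - E) \<omega>)"
      using C E by (intro integrable_mult_right integrable_real_indicator) (auto simp: Q.emeasure_eq_measure)
    fix \<omega> assume \<omega>: "\<omega> \<in> space Q"
    show "0 \<le> M * indicator (C - E) \<omega>" using M by simp
    have "measure (marginal P) (Ah \<omega>) \<le> M" if "\<omega> \<in> C"
      using measure_le_M_tau[OF marg \<open>{} \<in> \<A>\<close> sel[OF \<omega>]] that by (simp add: C_def cover_event_def M_def)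
    then show "indicator C \<omega> * measure (marginal P) (Ah \<omega>) \<le> M * indicator (C - E) \<omega>"
      using \<omega> M by (auto simp: E_def Q_def indicator_def)
  qed
  also have "\<dots> = M * (measure Q C - measure Q (E \<inter> C))"
    using C E Q.finite_measure_Diff'[OF C E] by (simp add: Int_commute)
  also have "\<dots> \<le> M * (\<alpha> * measure Q C)"
  proof (rule mult_left_mono[OF _ M])
    have "(1 - \<alpha>) * measure Q C \<le> (1 - \<alpha>) * 1"
      using \<alpha> by (intro mult_left_mono) (simp_all add: Q.prob_le_1)
    then show "measure Q C - measure Q (E \<inter> C) \<le> \<alpha> * measure Q C"
      using null by (simp add: algebra_simps)
  qed
  finally have "(\<integral>\<omega>. indicator C \<omega> * measure (marginal P) (Ah \<omega>) \<partial>Q) / measure Q C \<le> \<alpha> * M"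
    using pos by (simp add: divide_le_eq mult_ac)
  then show ?thesis
    unfolding regret_def by (simp add: Q_def C_def M_def algebra_simps)
qed

section \<open>Data-independent selection sets\<close>

definition coin_selection :: "'a set \<Rightarrow> real \<Rightarrow> 'a outcome \<Rightarrow> 'a set" where
  "coin_selection A a \<omega> = (if snd \<omega> \<le> a then A else {})"

lemma coin_selection_in_selection_sets:
  fixes A :: "'a::euclidean_space set"
  assumes "A \<in> \<A>" "{} \<in> \<A>" and [measurable]: "A \<in> sets borel"
  shows "coin_selection A a \<in> selection_sets n \<A>"
proof -
  have "(\<lambda>(x, \<omega>). x \<in> coin_selection A a \<omega>) = (\<lambda>p::'a \<times> 'a outcome. fst p \<in> A \<and> snd (snd p) \<le> a)"
    by (auto simp: coin_selection_def)
  moreover have "(\<lambda>p::'a \<times> 'a outcome. fst p \<in> A \<and> snd (snd p) \<le> a) \<in>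
      (borel :: 'a measure) \<Otimes>\<^sub>M outcome_space n \<rightarrow>\<^sub>M count_space UNIV"
    unfolding pred_def[symmetric] outcome_space_def by measurable
  ultimately show ?thesis using assms(1,2) by (auto simp: selection_sets_def coin_selection_def)
qed

lemma coin_selection_in_Ahat:
  fixes A :: "'a::euclidean_space set"
  assumes "A \<in> \<A>" "{} \<in> \<A>" "A \<in> sets borel" and \<alpha>: "0 \<le> \<alpha>" "\<alpha> \<le> 1"
  shows "coin_selection A \<alpha> \<in> Ahat n \<tau> \<alpha> \<A> (P_Lip \<mu>)"
proof -
  have "cover_event n (coin_selection A \<alpha>) eta \<tau> \<in> sets (sample_law n P) \<and>
      1 - \<alpha> \<le> measure (sample_law n P) (cover_event n (coin_selection A \<alpha>) eta \<tau>)"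
    if "(P, eta) \<in> P_Lip \<mu>" for P eta
  proof -
    have D: "is_distribution P" using that by (simp add: P_Lip_def)
    note P = is_distributionD(1,2)[OF D]
    interpret Q: prob_space "sample_law n P" by (rule prob_space_sample_law[OF P(1)])
    define L where "L = {\<omega> \<in> space (sample_law n P). snd \<omega> \<le> \<alpha>}"
    have L: "L \<in> sets (sample_law n P)" "measure (sample_law n P) L = \<alpha>"
      using measure_sample_law_randomisation_le[OF P(1) \<alpha>] by (simp_all add: L_def)
    show ?thesis
    proof (cases "A \<subseteq> superlevel eta \<tau>")
      case True
      then have "cover_event n (coin_selection A \<alpha>) eta \<tau> = space (sample_law n P)"
        by (auto simp: cover_event_def coin_selection_def space_sample_law[OF P(2)])
      then show ?thesis using \<alpha> by (simp add: Q.prob_space)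
    next
      case False
      then have "cover_event n (coin_selection A \<alpha>) eta \<tau> = space (sample_law n P) - L"
        by (auto simp: cover_event_def coin_selection_def space_sample_law[OF P(2)] L_def)
      then show ?thesis using Q.prob_compl[OF L(1)] L by auto
    qed
  qed
  then show ?thesis using coin_selection_in_selection_sets[OF assms(1-3)] by (auto simp: Ahat_def)
qed

lemma data_indep_coin_selection:
  fixes A :: "'a::euclidean_space set"
  shows "data_indep n \<A> (P_Lip \<mu>) (coin_selection A \<alpha>)"
  unfolding data_indep_def Let_def
proof (intro ballI, clarify, intro conjI ballI)
  fix A' P eta assume "A' \<in> \<A>" and "(P, eta) \<in> P_Lip \<mu>"
  then have P: "prob_space P" using is_distributionD(1) by (auto simp: P_Lip_def)
  interpret PP: prob_space "\<Pi>\<^sub>M i\<in>{..<n}. P" by (rule prob_space_PiM) (use P in auto)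
  interpret U: prob_space "uniform_measure lborel {0..1::real}" by (rule prob_space_uniform_unit)
  define Q where "Q = sample_law n P"
  define V where "V = {u::real. (u \<le> \<alpha> \<and> A = A') \<or> (\<not> u \<le> \<alpha> \<and> {} = A')}"
  have V: "V \<in> sets borel" unfolding V_def by measurable
  have E: "{\<omega> \<in> space Q. coin_selection A \<alpha> \<omega> = A'} = space (\<Pi>\<^sub>M i\<in>{..<n}. P) \<times> V"
    by (auto simp: Q_def space_sample_law_eq_Times V_def coin_selection_def)
  have "space (\<Pi>\<^sub>M i\<in>{..<n}. P) \<times> V \<in> sets Q"
    unfolding Q_def sample_law_def using V by (intro pair_measureI) auto
  then show "{\<omega> \<in> space (sample_law n P). coin_selection A \<alpha> \<omega> = A'} \<in> sets (sample_law n P)"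
    using E by (simp add: Q_def)
  fix B assume B: "B \<in> sets (\<Pi>\<^sub>M i\<in>{..<n}. P)"
  have B_sub: "B \<subseteq> space (\<Pi>\<^sub>M i\<in>{..<n}. P)" using sets.sets_into_space[OF B] .
  have data: "fst -` B \<inter> space Q = B \<times> UNIV"
    using B_sub by (auto simp: Q_def space_sample_law_eq_Times)
  have "measure Q (B \<times> V) = measure Q (space (\<Pi>\<^sub>M i\<in>{..<n}. P) \<times> V) * measure Q (B \<times> UNIV)"
    unfolding Q_def
    using measure_sample_law_Times[OF P B V] measure_sample_law_Times[OF P sets.top V]
      measure_sample_law_Times[OF P B, of UNIV]
    by (simp add: PP.prob_space U.prob_space)
  moreover have "(space (\<Pi>\<^sub>M i\<in>{..<n}. P) \<times> V) \<inter> (B \<times> UNIV) = B \<times> V"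
    using B_sub by auto
  ultimately show "measure (sample_law n P)
      ({\<omega> \<in> space (sample_law n P). coin_selection A \<alpha> \<omega> = A'} \<inter> (fst -` B \<inter> space (sample_law n P))) =
    measure (sample_law n P) {\<omega> \<in> space (sample_law n P). coin_selection A \<alpha> \<omega> = A'} *
    measure (sample_law n P) (fst -` B \<inter> space (sample_law n P))"
    unfolding Q_def[symmetric] E data by simp
qed

lemma regret_coin_selection:
  fixes A :: "'a::euclidean_space set"
  assumes PL: "(P, eta) \<in> P_Lip \<mu>" and A: "A \<subseteq> superlevel eta \<tau>" and \<alpha>: "0 \<le> \<alpha>" "\<alpha> \<le> 1"
  shows "regret n \<tau> (coin_selection A \<alpha>) P eta \<A> = M_tau \<tau> P eta \<A> - \<alpha> * measure (marginal P) A"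
proof -
  have D: "is_distribution P" using PL by (simp add: P_Lip_def)
  note P = is_distributionD(1,2)[OF D]
  define Q where "Q = sample_law n P"
  interpret Q: prob_space Q unfolding Q_def by (rule prob_space_sample_law[OF P(1)])
  have C: "cover_event n (coin_selection A \<alpha>) eta \<tau> = space Q"
    using A by (auto simp: cover_event_def coin_selection_def Q_def space_sample_law[OF P(2)])
  define L where "L = {\<omega> \<in> space Q. snd \<omega> \<le> \<alpha>}"
  have L: "L \<in> sets Q" "measure Q L = \<alpha>"
    using measure_sample_law_randomisation_le[OF P(1) \<alpha>] by (simp_all add: L_def Q_def)
  have "(\<integral>\<omega>. indicator (space Q) \<omega> * measure (marginal P) (coin_selection A \<alpha> \<omega>) \<partial>Q)
      = (\<integral>\<omega>. measure (marginal P) A * indicator L \<omega> \<partial>Q)"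
    by (rule Bochner_Integration.integral_cong) (auto simp: L_def coin_selection_def indicator_def)
  also have "\<dots> = measure (marginal P) A * \<alpha>" using L by simp
  finally show ?thesis unfolding regret_def C Q_def[symmetric] by (simp add: Q.prob_space)
qed

lemma Inf_regret_data_indep_eq:
  fixes \<mu> :: "'a::euclidean_space measure"
  assumes \<alpha>: "0 < \<alpha>" "\<alpha> < 1" and \<A>: "\<A> \<subseteq> sets borel" "{} \<in> \<A>" and PL: "(P, eta) \<in> P_Lip \<mu>"
    and lower: "\<And>Ab. Ab \<in> Ahat n \<tau> \<alpha> \<A> (P_Lip \<mu>) \<Longrightarrow> (1 - \<alpha>) * M_tau \<tau> P eta \<A> \<le> regret n \<tau> Ab P eta \<A>"
  shows "(1 - \<alpha>) * M_tau \<tau> P eta \<A> =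
    Inf {regret n \<tau> Ab P eta \<A> | Ab. Ab \<in> Ahat n \<tau> \<alpha> \<A> (P_Lip \<mu>) \<and> data_indep n \<A> (P_Lip \<mu>) Ab}"
proof -
  define M where "M = M_tau \<tau> P eta \<A>"
  define R where "R = {regret n \<tau> Ab P eta \<A> | Ab. Ab \<in> Ahat n \<tau> \<alpha> \<A> (P_Lip \<mu>) \<and> data_indep n \<A> (P_Lip \<mu>) Ab}"
  have marg: "prob_space (marginal P)"
    using PL prob_space_marginal by (auto simp: P_Lip_def)
  have R: "M - \<alpha> * measure (marginal P) A \<in> R" if "A \<in> \<A>" "A \<subseteq> superlevel eta \<tau>" for A
  proof -
    have "coin_selection A \<alpha> \<in> Ahat n \<tau> \<alpha> \<A> (P_Lip \<mu>)"
      using coin_selection_in_Ahat[OF that(1) \<A>(2)] \<A>(1) that(1) \<alpha> by auto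
    moreover have "regret n \<tau> (coin_selection A \<alpha>) P eta \<A> = M - \<alpha> * measure (marginal P) A"
      using regret_coin_selection[OF PL that(2)] \<alpha> by (simp add: M_def)
    moreover have "data_indep n \<A> (P_Lip \<mu>) (coin_selection A \<alpha>)"
      by (rule data_indep_coin_selection)
    ultimately show ?thesis
      unfolding R_def by (intro CollectI exI[of _ "coin_selection A \<alpha>"]) simp
  qed
  have "R \<noteq> {}"
    using M_tau_approx[OF marg \<A>(2), of 1] R by fastforce
  moreover have "(1 - \<alpha>) * M \<le> x" if "x \<in> R" for x
    using that lower by (auto simp: R_def M_def)
  moreover have "y \<le> (1 - \<alpha>) * M" if y: "\<And>x. x \<in> R \<Longrightarrow> y \<le> x" for y
  proof (rule ccontr)
    assume "\<not> y \<le> (1 - \<alpha>) * M"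
    define \<epsilon> where "\<epsilon> = (y - (1 - \<alpha>) * M) / \<alpha>"
    have "0 < \<epsilon>" using \<open>\<not> y \<le> (1 - \<alpha>) * M\<close> \<alpha> by (simp add: \<epsilon>_def)
    then obtain A where A: "A \<in> \<A>" "A \<subseteq> superlevel eta \<tau>" and "M - \<epsilon> < measure (marginal P) A"
      using M_tau_approx[OF marg \<A>(2)] unfolding M_def by blast
    then have "\<alpha> * (M - \<epsilon>) < \<alpha> * measure (marginal P) A" using \<alpha>(1) by simp
    moreover have "\<alpha> * \<epsilon> = y - (1 - \<alpha>) * M" using \<alpha>(1) by (simp add: \<epsilon>_def)
    moreover have "y \<le> M - \<alpha> * measure (marginal P) A" using y R[OF A] by blast
    ultimately show False by (simp add: algebra_simps)
  qed
  ultimately show ?thesis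
    unfolding M_def[symmetric] R_def[symmetric] by (intro cInf_eq_non_empty[symmetric]) auto
qed

lemma regret_ge_of_Ahat:
  fixes \<mu> :: "'a::euclidean_space measure"
  assumes \<tau>: "0 < \<tau>" and \<alpha>: "\<alpha> < 1"
    and \<mu>: "prob_space \<mu>" "sets \<mu> = sets borel" "\<forall>x. measure \<mu> {x} = 0"
    and \<A>: "\<A> \<subseteq> sets borel" "{} \<in> \<A>" and Ah: "Ah \<in> Ahat n \<tau> \<alpha> \<A> (P_Lip \<mu>)" and PL: "(P, eta) \<in> P_Lip \<mu>"
  shows "(1 - \<alpha>) * M_tau \<tau> P eta \<A> \<le> regret n \<tau> Ah P eta \<A>"
proof -
  have D: "is_distribution P" and mP: "marginal P = \<mu>" using PL by (simp_all add: P_Lip_def)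
  note P = is_distributionD(1,2)[OF D]
  note null = prob_null_cover_ge[OF \<tau> \<mu> \<A>(1) Ah PL]
  show ?thesis
  proof (rule regret_ge_of_prob_null_cover_ge)
    show "prob_space (sample_law n P)" by (rule prob_space_sample_law[OF P(1)])
    show "prob_space (marginal P)" using \<mu>(1) mP by simp
    show "Ah \<omega> \<in> \<A>" if "\<omega> \<in> space (sample_law n P)" for \<omega>
      using Ah that by (auto simp: Ahat_def selection_sets_def space_sample_law[OF P(2)])
    show "cover_event n Ah eta \<tau> \<in> sets (sample_law n P)"
      using Ah PL unfolding Ahat_def by blast
  qed (use null \<A>(2) \<alpha> mP in simp_all)
qed

theorem proposition1:
  fixes \<mu> :: "'a::euclidean_space measure"
    and \<A> :: "'a set set"
    and Ah :: "'a outcome \<Rightarrow> 'a set"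
    and n :: nat and \<tau> \<alpha> :: real
    and P :: "('a \<times> real) measure" and eta :: "'a \<Rightarrow> real"
  assumes "0 < \<tau>" "\<tau> < 1" "0 < \<alpha>" "\<alpha> < 1"
    and "prob_space \<mu>" "sets \<mu> = sets borel" "\<forall>x. measure \<mu> {x} = 0"
    and "\<A> \<subseteq> sets borel" "{} \<in> \<A>" "finite_VC \<A>"
    and "Ah \<in> Ahat n \<tau> \<alpha> \<A> (P_Lip \<mu>)"
    and "(P, eta) \<in> P_Lip \<mu>"
  shows "let Q = sample_law n P;
             C = cover_event n Ah eta \<tau>;
             E = {\<omega> \<in> space Q. measure \<mu> (Ah \<omega>) = 0}
         in cond_prob Q E C \<ge> measure Q (E \<inter> C)
          \<and> measure Q (E \<inter> C) \<ge> 1 - \<alpha>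
          \<and> regret n \<tau> Ah P eta \<A> \<ge> (1 - \<alpha>) * M_tau \<tau> P eta \<A>
          \<and> (1 - \<alpha>) * M_tau \<tau> P eta \<A> =
              Inf {regret n \<tau> Ab P eta \<A> | Ab.
                     Ab \<in> Ahat n \<tau> \<alpha> \<A> (P_Lip \<mu>) \<and> data_indep n \<A> (P_Lip \<mu>) Ab}"
proof -
  define Q where "Q = sample_law n P"
  define C where "C = cover_event n Ah eta \<tau>"
  define E where "E = {\<omega> \<in> space Q. measure \<mu> (Ah \<omega>) = 0}"
  have Q: "prob_space Q"
    using assms(12) is_distributionD(1) prob_space_sample_law by (auto simp: Q_def P_Lip_def)
  have C: "C \<in> sets Q" using assms(11,12) unfolding Ahat_def C_def Q_def by blast
  have null: "1 - \<alpha> \<le> measure Q (E \<inter> C)"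
    using prob_null_cover_ge(2)[OF assms(1,5-8,11,12)] by (simp add: Q_def E_def C_def)
  moreover have "measure Q (E \<inter> C) \<le> measure Q C"
    using C by (intro finite_measure.finite_measure_mono[OF prob_space.finite_measure[OF Q]]) auto
  ultimately have "0 < measure Q C" using assms(4) by linarith
  then have "measure Q (E \<inter> C) \<le> cond_prob Q E C" by (rule cond_prob_ge_measure_Int[OF Q C])
  moreover have lower: "(1 - \<alpha>) * M_tau \<tau> P eta \<A> \<le> regret n \<tau> Ab P eta \<A>"
    if "Ab \<in> Ahat n \<tau> \<alpha> \<A> (P_Lip \<mu>)" for Ab
    by (rule regret_ge_of_Ahat[OF assms(1,4-9) that assms(12)])
  ultimately show ?thesis
    unfolding Let_def Q_def[symmetric] C_def[symmetric] E_def[symmetric]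
    using null lower[OF assms(11)] Inf_regret_data_indep_eq[OF assms(3,4,8,9,12) lower] by simp
qed

end
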